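(* Let $G$ be a connected graph that is not complete and let $v\in V(G)$ be a universal vertex of $G$. Let $G_v$ be the graph obtained from $G$ by adding a new vertex $v'$ adjacent to $v$ and to every vertex of $N_G(v)$ (i.e. a true twin of $v$). Then $\chi(\mathcal{R}(G_v))=\chi(\mathcal{R}(G))$.
   Context: For a connected graph $G$, a search tree on $G$ is a rooted tree with vertex set $V(G)$ defined recursively: its root is some vertex $r\in V(G)$, and the children of $r$ are the roots of search trees on the connected components of $G-r$. For a rooted tree $T$ and $w\in V(T)$, $T|w$ denotes the subtree rooted at $w$. Let $T$ be a search tree on $G$, let $v$ be a child of $u$ in $T$, and let $p$ be the parent of $u$ (if it exists). The $uv$-rotation transforms $T$ into the search tree $T'$ in which: $u$ is a child of $v$ and $v$ is a child of $p$ (or $v$ is the root if $u$ was the root); every subtree of $u$ in $T$ other than $T|v$ is a subtree of $u$ in $T'$; and every subtree $S$ of $v$ in $T$ is a subtree of $u$ in $T'$ if $u$ is adjacent in $G$ to some vertex of $S$, and a subtree of $v$ in $T'$ otherwise. The rotation graph $\mathcal{R}(G)$ is the graph whose vertices are the search trees on $G$, two being adjacent iff they differ by one rotation. $\chi$ denotes chromatic number. A vertex is universal if it is adjacent to all other vertices. *)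

theory Defs
  imports Main
begin

definition simple_graph :: "'a set \<Rightarrow> ('a \<Rightarrow> 'a \<Rightarrow> bool) \<Rightarrow> bool" where
  "simple_graph V E \<longleftrightarrow> finite V \<and> (\<forall>x y. E x y \<longrightarrow> x \<in> V \<and> y \<in> V)
     \<and> (\<forall>x y. E x y \<longrightarrow> E y x) \<and> (\<forall>x. \<not> E x x)"

definition reach_in :: "('a \<Rightarrow> 'a \<Rightarrow> bool) \<Rightarrow> 'a set \<Rightarrow> 'a \<Rightarrow> 'a \<Rightarrow> bool" where
  "reach_in E S = (\<lambda>a b. E a b \<and> a \<in> S \<and> b \<in> S)\<^sup>*\<^sup>*"

definition connected_on :: "('a \<Rightarrow> 'a \<Rightarrow> bool) \<Rightarrow> 'a set \<Rightarrow> bool" where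
  "connected_on E S \<longleftrightarrow> S \<noteq> {} \<and> (\<forall>x\<in>S. \<forall>y\<in>S. reach_in E S x y)"

definition components :: "('a \<Rightarrow> 'a \<Rightarrow> bool) \<Rightarrow> 'a set \<Rightarrow> 'a set set" where
  "components E S = (\<lambda>x. {y \<in> S. reach_in E S x y}) ` S"

text \<open>A rooted tree on S is encoded by its parent function: the parent of x is
  Some p, the root and all vertices outside S are mapped to None.
  search_tree E S par: par encodes a search tree on the (connected) graph G[S].\<close>
inductive search_tree :: "('a \<Rightarrow> 'a \<Rightarrow> bool) \<Rightarrow> 'a set \<Rightarrow> ('a \<Rightarrow> 'a option) \<Rightarrow> bool"
  for E where
  "\<lbrakk> connected_on E S; r \<in> S; par r = None; \<forall>x. x \<notin> S \<longrightarrow> par x = None;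
     \<forall>C \<in> components E (S - {r}).
        \<exists>c \<in> C. par c = Some r \<and>
          search_tree E C (\<lambda>x. if x \<in> C \<and> x \<noteq> c then par x else None) \<rbrakk>
   \<Longrightarrow> search_tree E S par"

definition subtree :: "('a \<Rightarrow> 'a option) \<Rightarrow> 'a \<Rightarrow> 'a set" where
  "subtree par w = {x. (\<lambda>a b. par a = Some b)\<^sup>*\<^sup>* x w}"

definition rotate :: "('a \<Rightarrow> 'a \<Rightarrow> bool) \<Rightarrow> ('a \<Rightarrow> 'a option) \<Rightarrow> 'a \<Rightarrow> 'a \<Rightarrow> ('a \<Rightarrow> 'a option)" where
  "rotate E par u v = (\<lambda>x.
     if x = v then par u
     else if x = u then Some v
     else if par x = Some v then
       (if \<exists>y \<in> subtree par x. E u y then Some u else Some v)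
     else par x)"

definition rot_vertices :: "'a set \<Rightarrow> ('a \<Rightarrow> 'a \<Rightarrow> bool) \<Rightarrow> ('a \<Rightarrow> 'a option) set" where
  "rot_vertices V E = {par. search_tree E V par}"

definition rot_step :: "('a \<Rightarrow> 'a \<Rightarrow> bool) \<Rightarrow> ('a \<Rightarrow> 'a option) \<Rightarrow> ('a \<Rightarrow> 'a option) \<Rightarrow> bool" where
  "rot_step E T T' \<longleftrightarrow> (\<exists>u v. T v = Some u \<and> T' = rotate E T u v)"

definition rot_adj :: "('a \<Rightarrow> 'a \<Rightarrow> bool) \<Rightarrow> ('a \<Rightarrow> 'a option) \<Rightarrow> ('a \<Rightarrow> 'a option) \<Rightarrow> bool" where
  "rot_adj E T T' \<longleftrightarrow> rot_step E T T' \<or> rot_step E T' T"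

definition chromatic_number :: "'b set \<Rightarrow> ('b \<Rightarrow> 'b \<Rightarrow> bool) \<Rightarrow> nat" where
  "chromatic_number W A = (LEAST k. \<exists>c :: 'b \<Rightarrow> nat.
      (\<forall>x\<in>W. c x < k) \<and> (\<forall>x\<in>W. \<forall>y\<in>W. A x y \<longrightarrow> c x \<noteq> c y))"

definition add_twin :: "('a \<Rightarrow> 'a \<Rightarrow> bool) \<Rightarrow> 'a \<Rightarrow> 'a \<Rightarrow> ('a \<Rightarrow> 'a \<Rightarrow> bool)" where
  "add_twin E v v' = (\<lambda>x y. E x y
      \<or> (x = v' \<and> (y = v \<or> E v y))
      \<or> (y = v' \<and> (x = v \<or> E v x)))"

end

theory Submission
  imports Defs "HOL-Combinatorics.Transposition"
begin

text \<open>
  A search tree on \<open>G\<^sub>v\<close> in which \<open>v'\<close> lies above \<open>v\<close> yields a search tree on \<open>G\<close> by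
  deleting \<open>v'\<close> and attaching its unique child to its parent; exchanging the twins, an automorphism
  of \<open>G\<^sub>v\<close>, reduces all other search trees to this case. A rotation in \<open>R(G\<^sub>v)\<close> either
  induces a rotation of the merged trees and keeps the depth of the upper twin, or leaves the merged
  tree unchanged and changes that depth by one (or exchanges the twins). Hence the merged tree
  together with the parity of that depth is a homomorphism from \<open>R(G\<^sub>v)\<close> to the prism over
  \<open>R(G)\<close>, which is as colourable as \<open>R(G)\<close> once \<open>R(G)\<close> has an edge. Conversely, adding \<open>v'\<close>
  as a new root embeds \<open>R(G)\<close> into \<open>R(G\<^sub>v)\<close>.
\<close>

section \<open>Ancestry in parent functions\<close>

definition below :: "('a \<Rightarrow> 'a option) \<Rightarrow> 'a \<Rightarrow> 'a \<Rightarrow> bool" where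
  "below T = (\<lambda>a b. T a = Some b)\<^sup>*\<^sup>*"

lemma subtree_below: "subtree T w = {x. below T x w}"
  by (simp add: subtree_def below_def)

lemma below_refl [simp]: "below T x x"
  by (simp add: below_def)

lemma parent_below: "T x = Some y \<Longrightarrow> below T y z \<Longrightarrow> below T x z"
  unfolding below_def by (simp add: converse_rtranclp_into_rtranclp)

lemma below_parent: "below T x y \<Longrightarrow> T y = Some z \<Longrightarrow> below T x z"
  unfolding below_def by (simp add: rtranclp.rtrancl_into_rtrancl)

lemma below_trans: "below T x y \<Longrightarrow> below T y z \<Longrightarrow> below T x z"
  unfolding below_def by simp

lemma below_cases: "below T x y \<Longrightarrow> x = y \<or> (\<exists>p. T x = Some p \<and> below T p y)"
  unfolding below_def by (induction rule: converse_rtranclp_induct) auto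

lemma below_cases_child: "below T x y \<Longrightarrow> x = y \<or> (\<exists>c. T c = Some y \<and> below T x c)"
  unfolding below_def by (induction rule: rtranclp_induct) auto

lemma below_converse_induct [consumes 1, case_names base step]:
  assumes "below T x y" "P y" "\<And>a b. T a = Some b \<Longrightarrow> below T b y \<Longrightarrow> P b \<Longrightarrow> P a"
  shows "P x"
  using assms unfolding below_def by (induction rule: converse_rtranclp_induct) auto

lemma below_induct [consumes 1, case_names base step]:
  assumes "below T x y" "P x" "\<And>a b. below T x a \<Longrightarrow> T a = Some b \<Longrightarrow> P a \<Longrightarrow> P b"
  shows "P y"
  using assms unfolding below_def by (induction rule: rtranclp_induct) auto

lemma below_None_iff: "T x = None \<Longrightarrow> below T x y \<longleftrightarrow> y = x"
  using below_cases by fastforce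

lemma below_linear: "below T x y \<Longrightarrow> below T x z \<Longrightarrow> below T y z \<or> below T z y"
proof (induction arbitrary: z rule: below_converse_induct)
  case (step a b)
  from below_cases[OF step.prems] show ?case
  proof
    assume "a = z"
    then show ?thesis using parent_below[OF step.hyps(1,2)] by simp
  qed (use step in auto)
qed simp

lemma below_root_acyclic:
  assumes "below T x r" "T r = None" "T x = Some p"
  shows "\<not> below T p x"
  using assms
proof (induction arbitrary: p rule: below_converse_induct)
  case (step x y)
  then have "p = y" by simp
  show ?case
  proof
    assume "below T p x"
    from below_cases[OF this] show False
    proof
      assume "p = x"
      then show False using step \<open>p = y\<close> by (metis below_refl)
    next
      assume "\<exists>q. T p = Some q \<and> below T q x"
      then show False using step \<open>p = y\<close> by (metis below_parent)
    qed
  qed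
qed simp

lemma below_agree:
  assumes "below T a b" and "\<And>y. below T a y \<Longrightarrow> below T y b \<Longrightarrow> y \<noteq> b \<Longrightarrow> T' y = T y"
  shows "below T' a b"
  using assms
proof (induction rule: below_converse_induct)
  case (step a a')
  show ?case
  proof (cases "a = b")
    case False
    have "below T a b" using step.hyps(1,2) by (rule parent_below)
    then have "T' a = Some a'" using step.prems[of a] step.hyps(1) False by simp
    moreover have "below T' a' b"
      using step.prems step.hyps(1) by (intro step.IH) (metis parent_below)
    ultimately show ?thesis by (rule parent_below)
  qed simp
qed simp

definition ancestors :: "('a \<Rightarrow> 'a option) \<Rightarrow> 'a \<Rightarrow> 'a set" where
  "ancestors T x = {y. below T x y}"

text \<open>Applied to \<open>T x\<close>, this is the set of proper ancestors of \<open>x\<close>.\<close>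
definition ancestors_opt :: "('a \<Rightarrow> 'a option) \<Rightarrow> 'a option \<Rightarrow> 'a set" where
  "ancestors_opt T p = (case p of None \<Rightarrow> {} | Some q \<Rightarrow> ancestors T q)"

lemma ancestors_unfold: "ancestors T x = insert x (ancestors_opt T (T x))"
  unfolding ancestors_def ancestors_opt_def
  by (cases "T x") (auto simp: below_None_iff dest: below_cases intro: parent_below)

lemma below_ancestors_opt: "y \<in> ancestors_opt T (T x) \<Longrightarrow> below T x y"
  by (cases "T x") (auto simp: ancestors_opt_def ancestors_def intro: parent_below)

lemma ancestors_agree:
  assumes "\<And>y. y \<in> ancestors T a \<Longrightarrow> T' y = T y"
  shows "ancestors T' a = ancestors T a"
proof -
  have "below T' a z \<longleftrightarrow> below T a z" for z
  proof
    show "below T' a z \<Longrightarrow> below T a z"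
    proof (induction rule: below_induct)
      case (step y z)
      then show ?case using assms[of y] by (simp add: ancestors_def below_parent)
    qed simp
    show "below T a z \<Longrightarrow> below T' a z"
    proof (induction rule: below_induct)
      case (step y z)
      then show ?case using assms[of y] by (simp add: ancestors_def below_parent)
    qed simp
  qed
  then show ?thesis by (simp add: ancestors_def)
qed

lemma ancestors_opt_agree:
  assumes "\<And>y. y \<in> ancestors_opt T p \<Longrightarrow> T' y = T y"
  shows "ancestors_opt T' p = ancestors_opt T p"
proof (cases p)
  case (Some q)
  then show ?thesis using assms ancestors_agree[of T q T'] by (simp add: ancestors_opt_def)
qed (simp add: ancestors_opt_def)

lemma reach_in_mono:
  assumes "reach_in E A a b" "A \<subseteq> B" shows "reach_in E B a b"
proof -
  have "(\<lambda>a b. E a b \<and> a \<in> A \<and> b \<in> A) \<le> (\<lambda>a b. E a b \<and> a \<in> B \<and> b \<in> B)"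
    using assms(2) by auto
  then show ?thesis using assms(1) unfolding reach_in_def by (rule rtranclp_mono[THEN predicate2D])
qed

lemma reach_in_trans: "reach_in E A a b \<Longrightarrow> reach_in E A b c \<Longrightarrow> reach_in E A a c"
  unfolding reach_in_def by simp

lemma reach_in_step: "reach_in E A a b \<Longrightarrow> E b c \<Longrightarrow> b \<in> A \<Longrightarrow> c \<in> A \<Longrightarrow> reach_in E A a c"
  unfolding reach_in_def by (simp add: rtranclp.rtrancl_into_rtrancl)

lemma reach_in_edge: "E b c \<Longrightarrow> b \<in> A \<Longrightarrow> c \<in> A \<Longrightarrow> reach_in E A b c"
  unfolding reach_in_def by auto

lemma reach_in_sym:
  assumes "\<And>a b. E a b \<Longrightarrow> E b a" "reach_in E A a b"
  shows "reach_in E A b a"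
  using assms(2) unfolding reach_in_def
proof (induction rule: rtranclp_induct)
  case (step b c)
  then have "E c b" using assms(1) by blast
  then show ?case
    using step converse_rtranclp_into_rtranclp[of "\<lambda>a b. E a b \<and> a \<in> A \<and> b \<in> A" c b a] by blast
qed simp

lemma reach_in_cong:
  assumes "\<And>a b. a \<in> A \<Longrightarrow> b \<in> A \<Longrightarrow> E a b = E' a b"
  shows "reach_in E A = reach_in E' A"
proof -
  have "(\<lambda>a b. E a b \<and> a \<in> A \<and> b \<in> A) = (\<lambda>a b. E' a b \<and> a \<in> A \<and> b \<in> A)"
    using assms by blast
  then show ?thesis by (simp add: reach_in_def)
qed

lemma connected_on_cong:
  "(\<And>a b. a \<in> A \<Longrightarrow> b \<in> A \<Longrightarrow> E a b = E' a b) \<Longrightarrow> connected_on E A = connected_on E' A"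
  unfolding connected_on_def by (subst reach_in_cong[of A E E']) simp_all

lemma connected_on_universal:
  assumes "t \<in> A" "\<And>y. y \<in> A \<Longrightarrow> y \<noteq> t \<Longrightarrow> E t y \<and> E y t"
  shows "connected_on E A"
  unfolding connected_on_def
proof (intro conjI ballI)
  fix a b assume ab: "a \<in> A" "b \<in> A"
  have "reach_in E A a t"
    using assms ab(1) reach_in_edge[of E a t A] by (cases "a = t") (auto simp: reach_in_def)
  moreover have "reach_in E A t b"
    using assms ab(2) reach_in_edge[of E t b A] by (cases "b = t") (auto simp: reach_in_def)
  ultimately show "reach_in E A a b" by (rule reach_in_trans)
qed (use assms(1) in blast)

lemma connected_on_image:
  assumes "connected_on E A" "\<And>a b. a \<in> A \<Longrightarrow> b \<in> A \<Longrightarrow> E a b \<Longrightarrow> E (f a) (f b)"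
  shows "connected_on E (f ` A)"
proof -
  have "reach_in E (f ` A) (f a) (f b)" if "reach_in E A a b" for a b
    using that unfolding reach_in_def[of E A]
  proof (induction rule: rtranclp_induct)
    case (step b c)
    then show ?case using assms(2) reach_in_step[of E "f ` A" "f a" "f b" "f c"] by blast
  qed (simp add: reach_in_def)
  then show ?thesis using assms(1) unfolding connected_on_def by blast
qed

lemma component_eq:
  assumes "\<And>a b. E a b \<Longrightarrow> E b a" "C \<in> components E S" "a \<in> C"
  shows "C = {y \<in> S. reach_in E S a y}"
proof -
  obtain z where C: "C = {y \<in> S. reach_in E S z y}" using assms(2) by (auto simp: components_def)
  then have za: "reach_in E S z a" and az: "reach_in E S a z"
    using assms(3) reach_in_sym[OF assms(1)] by auto
  have "reach_in E S z y \<longleftrightarrow> reach_in E S a y" for y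
    using reach_in_trans[OF za, of y] reach_in_trans[OF az, of y] by blast
  then show ?thesis unfolding C by blast
qed

section \<open>Search trees as elimination trees\<close>

text \<open>A non-recursive description of search trees, see \<open>search_tree_iff_elimination_tree\<close>.\<close>
definition elimination_tree :: "('a \<Rightarrow> 'a \<Rightarrow> bool) \<Rightarrow> 'a set \<Rightarrow> ('a \<Rightarrow> 'a option) \<Rightarrow> bool" where
  "elimination_tree E S T \<longleftrightarrow> (\<forall>x. x \<notin> S \<longrightarrow> T x = None) \<and> (\<forall>x y. T x = Some y \<longrightarrow> y \<in> S)
     \<and> (\<exists>r\<in>S. T r = None \<and> (\<forall>x\<in>S. below T x r))
     \<and> (\<forall>a\<in>S. \<forall>b\<in>S. E a b \<longrightarrow> below T a b \<or> below T b a)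
     \<and> (\<forall>x\<in>S. connected_on E (subtree T x))"

lemma elimination_treeI:
  assumes "\<And>x. x \<notin> S \<Longrightarrow> T x = None" "\<And>x y. T x = Some y \<Longrightarrow> y \<in> S"
    "r \<in> S" "T r = None" "\<And>x. x \<in> S \<Longrightarrow> below T x r"
    "\<And>a b. a \<in> S \<Longrightarrow> b \<in> S \<Longrightarrow> E a b \<Longrightarrow> below T a b \<or> below T b a"
    "\<And>x. x \<in> S \<Longrightarrow> connected_on E (subtree T x)"
  shows "elimination_tree E S T"
  unfolding elimination_tree_def using assms by blast

context
  fixes E S T
  assumes elim: "elimination_tree E S T"
begin

lemma elimination_tree_outside: "x \<notin> S \<Longrightarrow> T x = None"
  using elim unfolding elimination_tree_def by blast

lemma elimination_tree_parent_in: "T x = Some y \<Longrightarrow> y \<in> S"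
  using elim unfolding elimination_tree_def by blast

lemma elimination_tree_child_in: "T x = Some y \<Longrightarrow> x \<in> S"
  using elimination_tree_outside[of x] by auto

lemma elimination_tree_root: "\<exists>r\<in>S. T r = None \<and> (\<forall>x\<in>S. below T x r)"
  using elim unfolding elimination_tree_def by blast

lemma elimination_tree_edge: "a \<in> S \<Longrightarrow> b \<in> S \<Longrightarrow> E a b \<Longrightarrow> below T a b \<or> below T b a"
  using elim unfolding elimination_tree_def by blast

lemma elimination_tree_subtree_connected: "x \<in> S \<Longrightarrow> connected_on E (subtree T x)"
  using elim unfolding elimination_tree_def by blast

lemma elimination_tree_below_root:
  assumes "r \<in> S" "T r = None" "x \<in> S" shows "below T x r"
proof -
  obtain \<rho> where \<rho>: "\<forall>y\<in>S. below T y \<rho>" using elimination_tree_root by blast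
  then have "r = \<rho>" using below_None_iff[of T r \<rho>] assms(1,2) by blast
  then show ?thesis using \<rho> assms(3) by blast
qed

lemma elimination_tree_below_in:
  assumes "x \<in> S" "below T y x" shows "y \<in> S"
  using below_cases[OF assms(2)]
proof
  assume "\<exists>p. T y = Some p \<and> below T p x"
  then show ?thesis using elimination_tree_child_in by blast
qed (use assms(1) in simp)

lemma elimination_tree_subtree_subset: "x \<in> S \<Longrightarrow> subtree T x \<subseteq> S"
  using elimination_tree_below_in unfolding subtree_below by blast

lemma elimination_tree_acyclic:
  assumes "T x = Some p" shows "\<not> below T p x"
proof -
  obtain r where r: "T r = None" "\<forall>y\<in>S. below T y r"
    using elimination_tree_root by blast
  have "below T x r" using r(2) elimination_tree_child_in[OF assms] by blast
  then show ?thesis using below_root_acyclic r(1) assms by metis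
qed

lemma elimination_tree_no_loop: "T x \<noteq> Some x"
  using elimination_tree_acyclic[of x x] by auto

lemma elimination_tree_parent_asym: "T x = Some y \<Longrightarrow> T y \<noteq> Some x"
  using elimination_tree_acyclic[of x y] parent_below[of T y x x] by auto

lemma elimination_tree_antisym:
  assumes "below T x y" "below T y x" shows "x = y"
proof (rule ccontr)
  assume "x \<noteq> y"
  then obtain p where "T x = Some p" "below T p y" using below_cases[OF assms(1)] by blast
  then show False using elimination_tree_acyclic below_trans[OF _ assms(2)] by blast
qed

lemma elimination_tree_same_parent:
  assumes "T x = Some p" "T y = Some p" "below T x y" shows "x = y"
proof (rule ccontr)
  assume "x \<noteq> y"
  then have "below T p y" using below_cases[OF assms(3)] assms(1) by auto
  then show False using elimination_tree_acyclic assms(2) by blast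
qed

lemma finite_ancestors: "finite S \<Longrightarrow> finite (ancestors T x)"
proof -
  have "ancestors T x \<subseteq> insert x S"
  proof
    fix y assume "y \<in> ancestors T x"
    then have "x = y \<or> (\<exists>c. T c = Some y)"
      using below_cases_child[of T x y] by (auto simp: ancestors_def)
    then show "y \<in> insert x S" using elimination_tree_parent_in by blast
  qed
  then show "finite S \<Longrightarrow> ?thesis" using finite_subset by blast
qed

lemma elimination_tree_cong:
  assumes "\<And>a b. a \<in> S \<Longrightarrow> b \<in> S \<Longrightarrow> E a b = E' a b"
  shows "elimination_tree E' S T"
proof -
  obtain r where r: "r \<in> S" "T r = None" "\<And>x. x \<in> S \<Longrightarrow> below T x r"
    using elimination_tree_root by blast
  show ?thesis
  proof (rule elimination_treeI[where r = r])
    show "connected_on E' (subtree T x)" if "x \<in> S" for x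
    proof -
      have "connected_on E (subtree T x)" using elimination_tree_subtree_connected that .
      moreover have "subtree T x \<subseteq> S" using elimination_tree_subtree_subset that .
      ultimately show ?thesis using connected_on_cong[of "subtree T x" E E'] assms by blast
    qed
    show "below T a b \<or> below T b a" if "a \<in> S" "b \<in> S" "E' a b" for a b
      using elimination_tree_edge that assms by blast
  qed (use r elimination_tree_outside elimination_tree_parent_in in auto)
qed

end

definition restrict_tree :: "'a set \<Rightarrow> 'a \<Rightarrow> ('a \<Rightarrow> 'a option) \<Rightarrow> ('a \<Rightarrow> 'a option)" where
  "restrict_tree C c T = (\<lambda>x. if x \<in> C \<and> x \<noteq> c then T x else None)"

lemma restrict_tree_below: "below (restrict_tree C c T) a b \<Longrightarrow> below T a b"
  by (induction rule: below_induct) (auto simp: restrict_tree_def split: if_splits intro: below_parent)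

lemma below_restrict_tree:
  assumes "T c = Some r" "T r = None"
    and closed: "\<forall>x y. x \<in> C \<longrightarrow> x \<noteq> c \<longrightarrow> T x = Some y \<longrightarrow> y \<in> C"
    and "below T a b" "a \<in> C" "b \<noteq> r"
  shows "b \<in> C \<and> below (restrict_tree C c T) a b"
  using assms(4-6)
proof (induction rule: below_converse_induct)
  case (step a a')
  show ?case
  proof (cases "a = c")
    case True
    then have "b = r" using step.hyps(1,2) assms(1,2) below_None_iff[of T r b] by simp
    then show ?thesis using step.prems by simp
  next
    case False
    then have "b \<in> C \<and> below (restrict_tree C c T) a' b"
      using closed step by blast
    moreover have "restrict_tree C c T a = Some a'"
      using False step by (simp add: restrict_tree_def)
    ultimately show ?thesis using parent_below[of "restrict_tree C c T" a a' b] by blast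
  qed
qed simp

lemma subtree_restrict_tree:
  assumes "T c = Some r" "T r = None" "r \<notin> C"
    and closed: "\<forall>x y. x \<in> C \<longrightarrow> x \<noteq> c \<longrightarrow> T x = Some y \<longrightarrow> y \<in> C"
    and "x \<in> C" "subtree T x \<subseteq> C"
  shows "subtree (restrict_tree C c T) x = subtree T x"
proof
  show "subtree (restrict_tree C c T) x \<subseteq> subtree T x"
    unfolding subtree_below using restrict_tree_below[of C c T _ x] by blast
  show "subtree T x \<subseteq> subtree (restrict_tree C c T) x"
  proof
    fix y assume "y \<in> subtree T x"
    then have yx: "below T y x" and "y \<in> C" using assms(6) by (auto simp: subtree_below)
    have "x \<noteq> r" using assms(3,5) by blast
    then show "y \<in> subtree (restrict_tree C c T) x"
      using below_restrict_tree[OF assms(1,2) closed yx \<open>y \<in> C\<close>] by (simp add: subtree_below)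
  qed
qed

lemma restrict_tree_below_root:
  assumes "elimination_tree E C (restrict_tree C c T)" "c \<in> C" "a \<in> C"
  shows "below T a c"
proof -
  have "restrict_tree C c T c = None" by (simp add: restrict_tree_def)
  then have "below (restrict_tree C c T) a c"
    using elimination_tree_below_root[OF assms(1,2) _ assms(3)] by blast
  then show ?thesis by (rule restrict_tree_below)
qed

lemma restrict_tree_closed:
  assumes "elimination_tree E C (restrict_tree C c T)"
  shows "\<forall>x y. x \<in> C \<longrightarrow> x \<noteq> c \<longrightarrow> T x = Some y \<longrightarrow> y \<in> C"
proof (intro allI impI)
  fix x y assume "x \<in> C" "x \<noteq> c" "T x = Some y"
  then have "restrict_tree C c T x = Some y" by (simp add: restrict_tree_def)
  then show "y \<in> C" by (rule elimination_tree_parent_in[OF assms])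
qed

context
  fixes E :: "'a \<Rightarrow> 'a \<Rightarrow> bool" and S :: "'a set" and T :: "'a \<Rightarrow> 'a option" and r :: 'a
  assumes sym: "\<And>a b. E a b \<Longrightarrow> E b a"
    and r: "r \<in> S" "T r = None" and outside: "\<And>x. x \<notin> S \<Longrightarrow> T x = None"
    and sub: "\<And>C. C \<in> components E (S - {r}) \<Longrightarrow>
                  \<exists>c\<in>C. T c = Some r \<and> elimination_tree E C (restrict_tree C c T)"
begin

lemma join_component:
  assumes "a \<in> S - {r}"
  obtains C c where "C = {y \<in> S - {r}. reach_in E (S - {r}) a y}" "a \<in> C" "c \<in> C" "T c = Some r"
    "elimination_tree E C (restrict_tree C c T)"
proof -
  let ?C = "{y \<in> S - {r}. reach_in E (S - {r}) a y}"
  have "?C \<in> components E (S - {r})" "a \<in> ?C"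
    using assms by (auto simp: components_def reach_in_def)
  then show ?thesis using sub that by blast
qed

lemma join_below_root:
  assumes "a \<in> S" shows "below T a r"
proof (cases "a = r")
  case False
  then have "a \<in> S - {r}" using assms by blast
  then obtain C c where C: "C = {y \<in> S - {r}. reach_in E (S - {r}) a y}" "a \<in> C" "c \<in> C"
      "T c = Some r" "elimination_tree E C (restrict_tree C c T)"
    by (rule join_component)
  have "below T a c" using restrict_tree_below_root[OF C(5) C(3) C(2)] .
  from below_parent[OF this C(4)] show ?thesis .
qed simp

lemma join_parent_in:
  assumes "T x = Some y" shows "y \<in> S"
proof -
  have x: "x \<in> S - {r}" using outside[of x] r(2) assms by auto
  then obtain C c where C: "C = {y \<in> S - {r}. reach_in E (S - {r}) x y}" "x \<in> C" "c \<in> C"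
      "T c = Some r" "elimination_tree E C (restrict_tree C c T)"
    using join_component[of x] by blast
  show ?thesis
  proof (cases "x = c")
    case True
    then show ?thesis using C(4) assms r(1) by simp
  next
    case False
    then have "y \<in> C" using restrict_tree_closed[OF C(5)] C(2) assms by blast
    then show ?thesis using C(1) by blast
  qed
qed

lemma join_edge:
  assumes "a \<in> S" "b \<in> S" "E a b"
  shows "below T a b \<or> below T b a"
proof (cases "a = r \<or> b = r")
  case False
  then obtain C c where C: "C = {y \<in> S - {r}. reach_in E (S - {r}) a y}" "a \<in> C"
      "elimination_tree E C (restrict_tree C c T)"
    using join_component[of a] assms(1) by blast
  then have "b \<in> C" using assms False reach_in_edge[of E a b "S - {r}"] by auto
  then have "below (restrict_tree C c T) a b \<or> below (restrict_tree C c T) b a"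
    using elimination_tree_edge[OF C(3) C(2) _ assms(3)] by blast
  then show ?thesis
    using restrict_tree_below[of C c T a b] restrict_tree_below[of C c T b a] by blast
next
  case True
  then show ?thesis using join_below_root[OF assms(1)] join_below_root[OF assms(2)] by auto
qed

lemma join_below_in: "below T y x \<Longrightarrow> x \<in> S \<Longrightarrow> y \<in> S"
  using below_cases[of T y x] outside by fastforce

lemma join_subtree_connected:
  assumes x: "x \<in> S - {r}"
  shows "connected_on E (subtree T x)"
proof -
  obtain C c where C: "C = {y \<in> S - {r}. reach_in E (S - {r}) x y}" "x \<in> C" "T c = Some r"
      "elimination_tree E C (restrict_tree C c T)"
    using join_component[OF x] by blast
  have "y \<in> C" if "below T y x" for y
  proof -
    have "y \<noteq> r" using that x below_None_iff[of T r x] r(2) by auto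
    then have y: "y \<in> S - {r}" using join_below_in[OF that] x by blast
    then obtain C' c' where C': "C' = {z \<in> S - {r}. reach_in E (S - {r}) y z}" "y \<in> C'"
        "T c' = Some r" "elimination_tree E C' (restrict_tree C' c' T)"
      using join_component[OF y] by blast
    then have "x \<in> C'"
      using below_restrict_tree[OF C'(3) r(2) restrict_tree_closed[OF C'(4)] that] x by blast
    moreover have "C' \<in> components E (S - {r})" using C'(1) y by (auto simp: components_def)
    ultimately have "C' = {z \<in> S - {r}. reach_in E (S - {r}) x z}"
      using component_eq[where E = E, OF sym] by blast
    then have "C' = C" using C(1) by simp
    then show ?thesis using C'(2) by blast
  qed
  then have "subtree T x \<subseteq> C" by (auto simp: subtree_below)
  moreover have "r \<notin> C" using C(1) by blast
  ultimately have "subtree (restrict_tree C c T) x = subtree T x"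
    using subtree_restrict_tree[OF C(3) r(2) _ restrict_tree_closed[OF C(4)] C(2)] by blast
  then show ?thesis using elimination_tree_subtree_connected[OF C(4) C(2)] by simp
qed

lemma elimination_tree_join:
  assumes "connected_on E S"
  shows "elimination_tree E S T"
proof (rule elimination_treeI[OF outside join_parent_in r join_below_root join_edge])
  show "connected_on E (subtree T x)" if "x \<in> S" for x
  proof (cases "x = r")
    case True
    then have "subtree T x = S"
      using join_below_in join_below_root r(1) by (auto simp: subtree_below)
    then show ?thesis using assms by simp
  next
    case False
    then show ?thesis using join_subtree_connected that by blast
  qed
qed

end

lemma search_tree_imp_elimination_tree:
  assumes "search_tree E S T" "\<And>a b. E a b \<Longrightarrow> E b a"
  shows "elimination_tree E S T"
  using assms(1)
proof (induction rule: search_tree.induct)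
  case (1 S r T)
  have "\<exists>c\<in>C. T c = Some r \<and> elimination_tree E C (restrict_tree C c T)"
    if "C \<in> components E (S - {r})" for C
    using 1(5) that unfolding restrict_tree_def by blast
  then show ?case
    using elimination_tree_join[where E = E and S = S and T = T and r = r, OF assms(2) 1(2,3)] 1(1,4)
    by blast
qed

lemma elimination_tree_child_subtree_edge:
  assumes elim: "elimination_tree E S T" and c: "T c = Some r" "T r = None"
    and z: "below T z c" and y: "y \<in> S" "y \<noteq> r" and "E z y"
  shows "below T y c"
proof -
  have "z \<in> S" using elimination_tree_below_in[OF elim elimination_tree_child_in[OF elim c(1)] z] .
  then have "below T z y \<or> below T y z" using elimination_tree_edge[OF elim _ y(1) \<open>E z y\<close>] by blast
  then show ?thesis
  proof
    assume "below T z y"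
    then have "below T c y \<or> below T y c" using below_linear[OF z] by blast
    moreover have "\<not> below T c y \<or> y = c"
      using below_cases[of T c y] c below_None_iff[of T r y] y(2) by auto
    ultimately show ?thesis by auto
  qed (rule below_trans[OF _ z])
qed

lemma not_below_root_child:
  "T c = Some r \<Longrightarrow> T r = None \<Longrightarrow> r \<notin> subtree T c"
  using below_None_iff[of T r c] by (auto simp: subtree_below)

lemma component_eq_subtree:
  assumes sym: "\<And>a b. E a b \<Longrightarrow> E b a" and elim: "elimination_tree E S T"
    and c: "T c = Some r" "T r = None" and C: "C \<in> components E (S - {r})" "a \<in> C" "below T a c"
  shows "C = subtree T c"
proof -
  have C_eq: "C = {y \<in> S - {r}. reach_in E (S - {r}) a y}" using component_eq[OF sym C(1,2)] .
  have sub: "subtree T c \<subseteq> S - {r}"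
    using elimination_tree_subtree_subset[OF elim elimination_tree_child_in[OF elim c(1)]]
      not_below_root_child[OF c] by blast
  have "y \<in> subtree T c" if "reach_in E (S - {r}) a y" for y
    using that unfolding reach_in_def
  proof (induction rule: rtranclp_induct)
    case (step z y)
    then have "below T z c" "E z y" "y \<in> S" "y \<noteq> r" by (auto simp: subtree_below)
    then show ?case
      using elimination_tree_child_subtree_edge[OF elim c] by (simp add: subtree_below)
  qed (use C(3) in \<open>simp add: subtree_below\<close>)
  moreover have "reach_in E (S - {r}) a y" if "y \<in> subtree T c" for y
  proof -
    have "a \<in> subtree T c" using C(3) by (simp add: subtree_below)
    then have "reach_in E (subtree T c) a y"
      using elimination_tree_subtree_connected[OF elim elimination_tree_child_in[OF elim c(1)]] that
      by (simp add: connected_on_def)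
    then show ?thesis using reach_in_mono[OF _ sub] by blast
  qed
  ultimately show ?thesis using C_eq sub by blast
qed

lemma elimination_tree_restrict:
  assumes elim: "elimination_tree E S T" and c: "T c = Some r" "T r = None"
  shows "elimination_tree E (subtree T c) (restrict_tree (subtree T c) c T)"
    (is "elimination_tree E ?C ?T")
proof -
  have cS: "c \<in> S" using elimination_tree_child_in[OF elim c(1)] .
  have closed: "\<forall>x y. x \<in> ?C \<longrightarrow> x \<noteq> c \<longrightarrow> T x = Some y \<longrightarrow> y \<in> ?C"
  proof (intro allI impI)
    fix x y assume "x \<in> ?C" "x \<noteq> c" "T x = Some y"
    then show "y \<in> ?C" using below_cases[of T x c] by (auto simp: subtree_below)
  qed
  have r: "r \<notin> ?C" using not_below_root_child[OF c] .
  have C_S: "?C \<subseteq> S" using elimination_tree_subtree_subset[OF elim cS] .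
  have lift: "below ?T a b" if "a \<in> ?C" "b \<in> ?C" "below T a b" for a b
    using below_restrict_tree[OF c closed that(3,1)] that(2) r by blast
  show ?thesis
  proof (rule elimination_treeI[where r = c])
    show "x \<notin> ?C \<Longrightarrow> ?T x = None" for x by (simp add: restrict_tree_def)
    show "?T x = Some y \<Longrightarrow> y \<in> ?C" for x y
      using closed by (auto simp: restrict_tree_def split: if_splits)
    show "c \<in> ?C" by (simp add: subtree_below)
    show "?T c = None" by (simp add: restrict_tree_def)
    show "below ?T x c" if "x \<in> ?C" for x
      using lift[OF that] that by (simp add: subtree_below)
    show "below ?T a b \<or> below ?T b a" if "a \<in> ?C" "b \<in> ?C" "E a b" for a b
      using elimination_tree_edge[OF elim _ _ that(3)] lift[OF that(1,2)] lift[OF that(2,1)] that(1,2) C_S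
      by blast
    show "connected_on E (subtree ?T x)" if "x \<in> ?C" for x
    proof -
      have "subtree T x \<subseteq> ?C" using that below_trans[of T _ x c] by (auto simp: subtree_below)
      then have "subtree ?T x = subtree T x"
        using subtree_restrict_tree[OF c r closed that] by blast
      then show ?thesis using elimination_tree_subtree_connected[OF elim] that C_S by auto
    qed
  qed
qed

lemma elimination_tree_imp_search_tree:
  assumes "finite S" "elimination_tree E S T" "\<And>a b. E a b \<Longrightarrow> E b a"
  shows "search_tree E S T"
  using assms(1,2)
proof (induction S arbitrary: T rule: finite_psubset_induct)
  case (psubset S T)
  note elim = psubset.prems
  obtain r where r: "r \<in> S" "T r = None" "\<forall>x\<in>S. below T x r"
    using elimination_tree_root[OF elim] by blast
  have "subtree T r = S"
    using r(3) elimination_tree_subtree_subset[OF elim r(1)] by (auto simp: subtree_below)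
  then have conn: "connected_on E S" using elimination_tree_subtree_connected[OF elim r(1)] by simp
  have "\<exists>c\<in>C. T c = Some r \<and> search_tree E C (restrict_tree C c T)"
    if C: "C \<in> components E (S - {r})" for C
  proof -
    obtain a where a: "a \<in> C" "a \<in> S - {r}"
      using C by (auto simp: components_def reach_in_def)
    then obtain c where c: "T c = Some r" "below T a c"
      using below_cases_child[of T a r] r(3) by blast
    have C_eq: "C = subtree T c"
      using component_eq_subtree[OF assms(3) elim c(1) r(2) C a(1) c(2)] .
    have "C \<subseteq> S" using C by (auto simp: components_def)
    then have "C \<subset> S" using r(1) not_below_root_child[OF c(1) r(2)] C_eq by blast
    then have "search_tree E C (restrict_tree C c T)"
      using psubset.IH elimination_tree_restrict[OF elim c(1) r(2)] C_eq by blast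
    moreover have "c \<in> C" using C_eq by (simp add: subtree_below)
    ultimately show ?thesis using c(1) by blast
  qed
  then have "\<forall>C\<in>components E (S - {r}).
      \<exists>c\<in>C. T c = Some r \<and> search_tree E C (\<lambda>x. if x \<in> C \<and> x \<noteq> c then T x else None)"
    unfolding restrict_tree_def by blast
  then show ?case
    using conn r(1,2) elimination_tree_outside[OF elim] by (intro search_tree.intros) auto
qed

lemma search_tree_iff_elimination_tree:
  "finite S \<Longrightarrow> (\<And>a b. E a b \<Longrightarrow> E b a) \<Longrightarrow> search_tree E S T \<longleftrightarrow> elimination_tree E S T"
  using search_tree_imp_elimination_tree elimination_tree_imp_search_tree by blast

section \<open>Rotations\<close>

lemma rotate_child: "rotate E T u w w = T u"
  by (simp add: rotate_def)

lemma rotate_parent: "u \<noteq> w \<Longrightarrow> rotate E T u w u = Some w"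
  by (simp add: rotate_def)

lemma rotate_grandchild:
  "x \<noteq> w \<Longrightarrow> x \<noteq> u \<Longrightarrow> T x = Some w \<Longrightarrow>
    rotate E T u w x = (if \<exists>y\<in>subtree T x. E u y then Some u else Some w)"
  by (simp add: rotate_def)

lemma rotate_other: "x \<noteq> w \<Longrightarrow> x \<noteq> u \<Longrightarrow> T x \<noteq> Some w \<Longrightarrow> rotate E T u w x = T x"
  by (simp add: rotate_def)

lemma rot_step_irrefl: "elimination_tree E S T \<Longrightarrow> \<not> rot_step E T T"
  unfolding rot_step_def using rotate_child elimination_tree_no_loop by metis

lemma ancestors_segment:
  assumes elim: "elimination_tree E S T" and "below T a c"
    and agree: "\<And>z. below T a z \<Longrightarrow> below T z c \<Longrightarrow> z \<noteq> c \<Longrightarrow> T' z = T z"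
  shows "ancestors T' a = {z. below T a z \<and> below T z c} \<union> ancestors T' c"
proof
  have "below T' a c" using below_agree[OF assms(2) agree] .
  moreover have "below T' a z" if "below T a z" "below T z c" for z
  proof (rule below_agree[OF that(1)])
    fix y assume y: "below T a y" "below T y z" "y \<noteq> z"
    have "below T y c" using below_trans[OF y(2) that(2)] .
    moreover have "y \<noteq> c" using elimination_tree_antisym[OF elim that(2)] y(2,3) by blast
    ultimately show "T' y = T y" using agree y(1) by blast
  qed
  ultimately show "{z. below T a z \<and> below T z c} \<union> ancestors T' c \<subseteq> ancestors T' a"
    using below_trans[OF \<open>below T' a c\<close>] by (auto simp: ancestors_def)
  have "z \<in> {z. below T a z \<and> below T z c} \<union> ancestors T' c" if "below T' a z" for z
    using that
  proof (induction rule: below_induct)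
    case (step y y')
    show ?case
    proof (cases "y \<in> ancestors T' c")
      case True
      then show ?thesis using below_parent[of T' c y y'] step.hyps(2) by (simp add: ancestors_def)
    next
      case False
      then have y: "below T a y" "below T y c" "y \<noteq> c" using step.IH by (auto simp: ancestors_def)
      then have "T y = Some y'" using agree step.hyps(2) by metis
      then have "below T a y'" "below T y' c \<or> y = c"
        using below_parent[OF y(1)] below_cases[OF y(2)] by auto
      then show ?thesis using y(3) by blast
    qed
  qed (use assms(2) in \<open>simp add: ancestors_def\<close>)
  then show "ancestors T' a \<subseteq> {z. below T a z \<and> below T z c} \<union> ancestors T' c"
    by (auto simp: ancestors_def)
qed

context
  fixes E S T u w
  assumes elim: "elimination_tree E S T" and wu: "T w = Some u"
begin

lemma not_in_ancestors_opt_parent: "u \<notin> ancestors_opt T (T u)" "w \<notin> ancestors_opt T (T u)"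
proof -
  show "u \<notin> ancestors_opt T (T u)"
    using elimination_tree_acyclic[OF elim, of u]
    by (cases "T u") (auto simp: ancestors_opt_def ancestors_def)
  show "w \<notin> ancestors_opt T (T u)"
    using below_ancestors_opt[of w T u] elimination_tree_acyclic[OF elim wu] by blast
qed

lemma ancestors_opt_rotate: "ancestors_opt (rotate E T u w) (T u) = ancestors_opt T (T u)"
proof (rule ancestors_opt_agree)
  fix y assume "y \<in> ancestors_opt T (T u)"
  then have uy: "below T u y" and "y \<noteq> u" "y \<noteq> w"
    using below_ancestors_opt not_in_ancestors_opt_parent by metis+
  moreover have "T y \<noteq> Some w"
  proof
    assume "T y = Some w"
    then have "below T y u" using wu parent_below[of T y w u] parent_below[of T w u u] by simp
    then show False using elimination_tree_antisym[OF elim uy] \<open>y \<noteq> u\<close> by blast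
  qed
  ultimately show "rotate E T u w y = T y" using rotate_other by metis
qed

lemma ancestors_rotate:
  "ancestors T w = insert w (insert u (ancestors_opt T (T u)))"
  "ancestors (rotate E T u w) w = insert w (ancestors_opt T (T u))"
  "ancestors (rotate E T u w) u = insert u (insert w (ancestors_opt T (T u)))"
proof -
  have "u \<noteq> w" using elimination_tree_no_loop[OF elim] wu by blast
  show "ancestors T w = insert w (insert u (ancestors_opt T (T u)))"
    using ancestors_unfold[of T w] ancestors_unfold[of T u] wu by (simp add: ancestors_opt_def)
  show *: "ancestors (rotate E T u w) w = insert w (ancestors_opt T (T u))"
    using ancestors_unfold[of "rotate E T u w" w] ancestors_opt_rotate by (simp add: rotate_child)
  show "ancestors (rotate E T u w) u = insert u (insert w (ancestors_opt T (T u)))"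
    using ancestors_unfold[of "rotate E T u w" u] * rotate_parent[OF \<open>u \<noteq> w\<close>]
    by (simp add: ancestors_opt_def)
qed

lemma card_ancestors_rotate:
  assumes "finite S"
  shows "card (ancestors T w) = Suc (card (ancestors (rotate E T u w) w))"
    and "card (ancestors (rotate E T u w) u) = Suc (card (ancestors T u))"
proof -
  have "u \<noteq> w" using elimination_tree_no_loop[OF elim] wu by blast
  have "finite (ancestors_opt T (T u))"
    using finite_ancestors[OF elim assms, of u] ancestors_unfold[of T u] by simp
  moreover have "ancestors T u = insert u (ancestors_opt T (T u))" by (rule ancestors_unfold)
  ultimately show "card (ancestors T w) = Suc (card (ancestors (rotate E T u w) w))"
    and "card (ancestors (rotate E T u w) u) = Suc (card (ancestors T u))"
    using ancestors_rotate not_in_ancestors_opt_parent \<open>u \<noteq> w\<close> by simp_all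
qed

end

definition add_root :: "'a \<Rightarrow> 'a set \<Rightarrow> ('a \<Rightarrow> 'a option) \<Rightarrow> ('a \<Rightarrow> 'a option)" where
  "add_root x S T = (\<lambda>y. if y = x then None else if y \<in> S \<and> T y = None then Some x else T y)"

context
  fixes S :: "'a set" and T :: "'a \<Rightarrow> 'a option" and x :: 'a
  assumes outside: "\<And>y. y \<notin> S \<Longrightarrow> T y = None" and fresh: "x \<notin> S"
begin

lemma add_root_outside: "y \<notin> insert x S \<Longrightarrow> add_root x S T y = None"
  using outside by (simp add: add_root_def)

lemma below_add_root: "below T a b \<Longrightarrow> below (add_root x S T) a b"
proof (induction rule: below_induct)
  case (step y z)
  have "y \<in> S" using outside[of y] step.hyps(2) by (cases "y \<in> S") auto
  then have "add_root x S T y = Some z" using step.hyps(2) fresh by (auto simp: add_root_def)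
  then show ?case using below_parent[OF step.IH] by blast
qed simp

lemma below_add_rootD: "below (add_root x S T) a b \<Longrightarrow> b \<noteq> x \<Longrightarrow> below T a b"
proof (induction rule: below_converse_induct)
  case (step a a')
  have "a' \<noteq> x"
  proof
    assume "a' = x"
    then have "b = x"
      using step.hyps(2) below_None_iff[of "add_root x S T" x b] by (simp add: add_root_def)
    then show False using step.prems by simp
  qed
  then have "T a = Some a'" using step.hyps(1) by (auto simp: add_root_def split: if_splits)
  then show ?case using parent_below[of T a a' b] step by blast
qed simp

lemma subtree_add_root: "y \<noteq> x \<Longrightarrow> subtree (add_root x S T) y = subtree T y"
  using below_add_root[of _ y] below_add_rootD[of _ y] by (auto simp: subtree_below)

end

context
  fixes E S T x
  assumes elim: "elimination_tree E S T" and fresh: "x \<notin> S"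
begin

lemma below_new_root: "y \<in> insert x S \<Longrightarrow> below (add_root x S T) y x"
proof (cases "y = x")
  case False
  assume "y \<in> insert x S"
  obtain r where r: "r \<in> S" "T r = None" "\<forall>y\<in>S. below T y r"
    using elimination_tree_root[OF elim] by blast
  have "add_root x S T r = Some x" using r fresh by (auto simp: add_root_def)
  moreover have "below T y r" using r(3) False \<open>y \<in> insert x S\<close> by blast
  then have "below (add_root x S T) y r"
    using below_add_root[where S = S and T = T and x = x] elimination_tree_outside[OF elim] fresh
    by blast
  ultimately show ?thesis using below_parent by metis
qed simp

lemma subtree_new_root: "subtree (add_root x S T) x = insert x S"
proof
  show "insert x S \<subseteq> subtree (add_root x S T) x" using below_new_root by (auto simp: subtree_below)
  show "subtree (add_root x S T) x \<subseteq> insert x S"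
  proof
    fix y assume "y \<in> subtree (add_root x S T) x"
    then have "y = x \<or> (\<exists>p. add_root x S T y = Some p)"
      using below_cases[of "add_root x S T" y x] by (auto simp: subtree_below)
    then show "y \<in> insert x S"
      using elimination_tree_child_in[OF elim] by (auto simp: add_root_def split: if_splits)
  qed
qed

lemma elimination_tree_add_root:
  assumes conn: "connected_on E (insert x S)"
  shows "elimination_tree E (insert x S) (add_root x S T)"
proof (rule elimination_treeI[where r = x])
  note outside = elimination_tree_outside[OF elim]
  show "add_root x S T y = None" if "y \<notin> insert x S" for y
    using that outside by (simp add: add_root_def)
  show "z \<in> insert x S" if "add_root x S T y = Some z" for y z
    using that elimination_tree_parent_in[OF elim] by (auto simp: add_root_def split: if_splits)
  show "below (add_root x S T) a b \<or> below (add_root x S T) b a"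
    if "a \<in> insert x S" "b \<in> insert x S" "E a b" for a b
  proof (cases "a = x \<or> b = x")
    case False
    then show ?thesis
      using elimination_tree_edge[OF elim, of a b] that
        below_add_root[where S = S and T = T and x = x, OF outside fresh] by blast
  qed (use below_new_root that in blast)
  show "connected_on E (subtree (add_root x S T) y)" if "y \<in> insert x S" for y
  proof (cases "y = x")
    case False
    then show ?thesis
      using that subtree_add_root[where S = S and T = T and x = x, OF outside fresh False]
        elimination_tree_subtree_connected[OF elim] by simp
  qed (use conn subtree_new_root in simp)
  show "below (add_root x S T) y x" if "y \<in> insert x S" for y using below_new_root[OF that] .
qed (simp_all add: add_root_def)

lemma add_root_rotate:
  assumes "T w = Some u" and E': "\<And>a b. a \<in> S \<Longrightarrow> b \<in> S \<Longrightarrow> E' a b = E a b"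
  shows "add_root x S (rotate E T u w) = rotate E' (add_root x S T) u w"
proof
  fix y
  let ?P = "add_root x S T"
  have w: "w \<in> S" and u: "u \<in> S"
    using elimination_tree_child_in[OF elim] elimination_tree_parent_in[OF elim] assms(1) by auto
  have "u \<noteq> w" using elimination_tree_no_loop[OF elim] assms(1) by blast
  consider "y = x" | "y = w" | "y = u" | "y \<noteq> x" "y \<noteq> w" "y \<noteq> u" "T y = Some w"
    | "y \<noteq> x" "y \<noteq> w" "y \<noteq> u" "T y \<noteq> Some w" by blast
  then show "add_root x S (rotate E T u w) y = rotate E' ?P u w y"
  proof cases
    case 4
    have "subtree T y \<subseteq> S"
      using elimination_tree_subtree_subset[OF elim elimination_tree_child_in[OF elim 4(4)]] .
    then have "\<forall>z\<in>subtree T y. E' u z = E u z" using E'[OF u] by blast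
    moreover have "subtree ?P y = subtree T y"
      using subtree_add_root[where S = S and T = T and x = x] elimination_tree_outside[OF elim] fresh 4(1)
      by blast
    ultimately have "(\<exists>z\<in>subtree ?P y. E' u z) \<longleftrightarrow> (\<exists>z\<in>subtree T y. E u z)" by simp
    moreover have "?P y = Some w" using 4 by (simp add: add_root_def)
    ultimately show ?thesis
      using rotate_grandchild[of y w u ?P E', OF 4(2,3)] rotate_grandchild[of y w u T E, OF 4(2,3,4)] 4(1)
      by (simp add: add_root_def)
  next
    case 5
    moreover have "?P y \<noteq> Some w" using 5 w fresh by (auto simp: add_root_def)
    ultimately show ?thesis
      using rotate_other[of y w u ?P E'] rotate_other[of y w u T E, OF 5(2-4)]
      by (simp add: add_root_def)
  qed (use w u fresh \<open>u \<noteq> w\<close> in \<open>auto simp: add_root_def rotate_def\<close>)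
qed

end

lemma exists_elimination_tree:
  assumes "finite S" "t \<in> S" "\<And>y. y \<in> S \<Longrightarrow> y \<noteq> t \<Longrightarrow> E t y \<and> E y t"
  shows "\<exists>T. elimination_tree E S T"
proof -
  have "\<exists>T. elimination_tree E (insert t A) T" if "A \<subseteq> S" for A
    using finite_subset[OF that assms(1)] that
  proof (induction A rule: finite_induct)
    case empty
    have "elimination_tree E {t} (\<lambda>_. None)"
    proof (rule elimination_treeI[where r = t])
      show "connected_on E (subtree (\<lambda>_. None) x)" if "x \<in> {t}" for x
        using that by (simp add: subtree_below below_None_iff connected_on_def reach_in_def)
    qed simp_all
    then show ?case by auto
  next
    case (insert x A)
    then obtain T where T: "elimination_tree E (insert t A) T" by blast
    show ?case
    proof (cases "x = t")
      case False
      have "connected_on E (insert x (insert t A))"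
        using insert.prems assms(2,3) by (intro connected_on_universal[of t]) auto
      then have "elimination_tree E (insert x (insert t A)) (add_root x (insert t A) T)"
        using elimination_tree_add_root[OF T] insert.hyps(2) False by blast
      then show ?thesis by (metis insert_commute)
    qed (use T in auto)
  qed
  then show ?thesis using assms(2) insert_absorb by fastforce
qed

lemma rotate_add_roots:
  assumes elim: "elimination_tree E C T" and xw: "x \<notin> C" "w \<notin> C" "x \<noteq> w"
    and adj: "z \<in> C" "E w z"
  shows "rotate E (add_root w (insert x C) (add_root x C T)) w x = add_root x (insert w C) (add_root w C T)"
    (is "rotate E ?Tw w x = ?Tx")
proof
  fix y
  note outside = elimination_tree_outside[OF elim]
  obtain r where r: "r \<in> C" "T r = None" "\<forall>y\<in>C. below T y r"
    using elimination_tree_root[OF elim] by blast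
  consider "y = x" | "y = w" | "y \<notin> insert x (insert w C)" | "y = r" | "y \<in> C" "y \<noteq> r"
    using r(1) by blast
  then show "rotate E ?Tw w x y = ?Tx y"
  proof cases
    case 3
    then have "?Tw y = None" "?Tx y = None" using outside[of y] by (auto simp: add_root_def)
    then show ?thesis using 3 rotate_other[of y x w ?Tw E] by auto
  next
    case 4
    have "below T z r" using r(3) adj(1) by blast
    then have "below (add_root x C T) z r"
      using below_add_root[where S = C and T = T and x = x] outside xw(1) by blast
    moreover have "add_root x C T y = None" if "y \<notin> insert x C" for y
      using add_root_outside[where S = C and T = T and x = x] outside xw(1) that by blast
    ultimately have "below ?Tw z r"
      using below_add_root[where S = "insert x C" and T = "add_root x C T" and x = w] xw by blast
    then have "\<exists>z\<in>subtree ?Tw r. E w z" using adj(2) by (auto simp: subtree_below)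
    moreover have "?Tw r = Some x" "?Tx r = Some w" using r(1,2) xw by (auto simp: add_root_def)
    ultimately show ?thesis using 4 r(1) xw rotate_grandchild[of r x w ?Tw E] by auto
  next
    case 5
    then obtain p where p: "T y = Some p" "p \<in> C"
      using below_cases[of T y r] r(3) elimination_tree_parent_in[OF elim] by blast
    then have "?Tw y = Some p" "?Tx y = Some p" using 5 xw by (auto simp: add_root_def)
    then show ?thesis using 5 p(2) xw rotate_other[of y x w ?Tw E] by auto
  qed (use xw in \<open>auto simp: add_root_def rotate_def\<close>)
qed

section \<open>Colourings\<close>

definition colorable :: "'b set \<Rightarrow> ('b \<Rightarrow> 'b \<Rightarrow> bool) \<Rightarrow> nat \<Rightarrow> bool" where
  "colorable W A k \<longleftrightarrow> (\<exists>c :: 'b \<Rightarrow> nat. (\<forall>x\<in>W. c x < k) \<and> (\<forall>x\<in>W. \<forall>y\<in>W. A x y \<longrightarrow> c x \<noteq> c y))"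

lemma chromatic_number_le: "colorable W A k \<Longrightarrow> chromatic_number W A \<le> k"
  unfolding chromatic_number_def colorable_def by (rule Least_le)

lemma colorable_chromatic_number: "colorable W A k \<Longrightarrow> colorable W A (chromatic_number W A)"
  unfolding chromatic_number_def colorable_def by (rule LeastI_ex) blast

lemma colorable_card:
  assumes "finite W" "\<And>x. x \<in> W \<Longrightarrow> \<not> A x x"
  shows "colorable W A (card W)"
proof -
  obtain f :: "_ \<Rightarrow> nat" and n where f: "f ` W = {i. i < n}" "inj_on f W"
    using finite_imp_inj_to_nat_seg[OF assms(1)] by blast
  have "n = card W" using f card_image[OF f(2)] by simp
  then show ?thesis
    using f assms(2) unfolding colorable_def inj_on_def by (intro exI[of _ f]) blast
qed

lemma colorable_hom:
  assumes "colorable W' A' k" "f ` W \<subseteq> W'" "\<And>x y. x \<in> W \<Longrightarrow> y \<in> W \<Longrightarrow> A x y \<Longrightarrow> A' (f x) (f y)"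
  shows "colorable W A k"
proof -
  obtain c where "\<forall>x\<in>W'. c x < k" "\<forall>x\<in>W'. \<forall>y\<in>W'. A' x y \<longrightarrow> c x \<noteq> c y"
    using assms(1) unfolding colorable_def by blast
  then show ?thesis
    using assms(2,3) unfolding colorable_def
    by (intro exI[of _ "c \<circ> f"]) (auto simp: image_subset_iff)
qed

lemma colorable_two_le:
  assumes "colorable W A k" "x \<in> W" "y \<in> W" "A x y"
  shows "2 \<le> k"
proof -
  obtain c where "\<forall>x\<in>W. c x < k" "\<forall>x\<in>W. \<forall>y\<in>W. A x y \<longrightarrow> c x \<noteq> c y"
    using assms(1) unfolding colorable_def by blast
  then have "c x < k" "c y < k" "c x \<noteq> c y" using assms(2-4) by auto
  then show ?thesis by linarith
qed

definition prism_adj :: "('b \<Rightarrow> 'b \<Rightarrow> bool) \<Rightarrow> 'b \<times> nat \<Rightarrow> 'b \<times> nat \<Rightarrow> bool" where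
  "prism_adj A p q \<longleftrightarrow> (A (fst p) (fst q) \<and> snd p = snd q) \<or> (fst p = fst q \<and> snd p \<noteq> snd q)"

lemma prism_adj_sym: "(\<And>a b. A a b \<Longrightarrow> A b a) \<Longrightarrow> prism_adj A p q \<Longrightarrow> prism_adj A q p"
  by (auto simp: prism_adj_def)

lemma colorable_prism:
  assumes "colorable W A k" "2 \<le> k"
  shows "colorable (W \<times> {0, 1}) (prism_adj A) k"
proof -
  obtain c where c: "\<forall>x\<in>W. c x < k" "\<forall>x\<in>W. \<forall>y\<in>W. A x y \<longrightarrow> c x \<noteq> c y"
    using assms(1) unfolding colorable_def by blast
  have main: "(c x + i) mod k \<noteq> (c y + j) mod k"
    if "x \<in> W" "y \<in> W" "i \<in> {0, 1}" "j \<in> {0, 1}" "prism_adj A (x, i) (y, j)" for x y i j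
  proof -
    have "(c x + i) mod k = (if c x + i = k then 0 else c x + i)"
      "(c y + j) mod k = (if c y + j = k then 0 else c y + j)"
      using c(1) that(1-4) assms(2) by auto
    moreover have "A x y \<Longrightarrow> c x \<noteq> c y" "c x < k" "c y < k" using c that(1,2) by auto
    ultimately show ?thesis using that(3-5) assms(2) by (auto simp: prism_adj_def split: if_splits)
  qed
  show ?thesis
    unfolding colorable_def
  proof (intro exI[of _ "\<lambda>(x, i). (c x + i) mod k"] conjI ballI impI)
    show "(case p of (x, i) \<Rightarrow> (c x + i) mod k) < k" for p
      using assms(2) by (cases p) simp
    fix p q assume pq: "p \<in> W \<times> {0, 1}" "q \<in> W \<times> {0, 1}" "prism_adj A p q"
    obtain x i y j where "p = (x, i)" "q = (y, j)" by (cases p, cases q)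
    then show "(case p of (x, i) \<Rightarrow> (c x + i) mod k) \<noteq> (case q of (x, i) \<Rightarrow> (c x + i) mod k)"
      using main[of x y i j] pq by simp
  qed
qed

lemma finite_rot_vertices:
  assumes "finite S" "\<And>a b. E a b \<Longrightarrow> E b a"
  shows "finite (rot_vertices S E)"
proof -
  let ?W = "{T :: 'a \<Rightarrow> 'a option. (\<forall>x. x \<notin> S \<longrightarrow> T x = None) \<and> (\<forall>x y. T x = Some y \<longrightarrow> y \<in> S)}"
  let ?g = "\<lambda>T :: 'a \<Rightarrow> 'a option. {(a, b). T a = Some b}"
  have inj: "inj_on ?g ?W"
  proof (rule inj_onI)
    fix T1 T2 assume "?g T1 = ?g T2"
    then have "T1 a = Some b \<longleftrightarrow> T2 a = Some b" for a b by (simp add: set_eq_iff)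
    then show "T1 = T2" by (metis not_None_eq ext)
  qed
  have "?g ` ?W \<subseteq> Pow (S \<times> S)" by auto
  moreover have "finite (Pow (S \<times> S))" using assms(1) by simp
  ultimately have "finite (?g ` ?W)" by (rule finite_subset)
  then have "finite ?W" using inj by (rule finite_imageD)
  moreover have "rot_vertices S E \<subseteq> ?W"
  proof
    fix T assume "T \<in> rot_vertices S E"
    then have elim: "elimination_tree E S T"
      using search_tree_imp_elimination_tree[of E S T] assms(2) by (simp add: rot_vertices_def)
    show "T \<in> ?W"
      using elimination_tree_outside[OF elim] elimination_tree_parent_in[OF elim] by blast
  qed
  ultimately show ?thesis using finite_subset by blast
qed

lemma rot_vertices_eq:
  "finite S \<Longrightarrow> (\<And>a b. E a b \<Longrightarrow> E b a) \<Longrightarrow> rot_vertices S E = {T. elimination_tree E S T}"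
  using search_tree_iff_elimination_tree[of S E] by (auto simp: rot_vertices_def)

lemma colorable_rot_graph:
  assumes "finite S" "\<And>a b. E a b \<Longrightarrow> E b a"
  shows "colorable (rot_vertices S E) (rot_adj E) (chromatic_number (rot_vertices S E) (rot_adj E))"
proof (rule colorable_chromatic_number[OF colorable_card])
  show "finite (rot_vertices S E)" using finite_rot_vertices[OF assms] .
  show "\<not> rot_adj E T T" if "T \<in> rot_vertices S E" for T
  proof -
    have "elimination_tree E S T" using that rot_vertices_eq[of S E] assms by blast
    then show ?thesis using rot_step_irrefl by (auto simp: rot_adj_def)
  qed
qed

section \<open>Tree surgery\<close>

lemma elimination_tree_universal_below_child:
  assumes elim: "elimination_tree E S T" and t: "t \<in> S" "\<And>x. x \<in> S \<Longrightarrow> x \<noteq> t \<Longrightarrow> E t x"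
    and ty: "below T t y" "t \<noteq> y" and xy: "T x = Some y"
  shows "below T t x"
proof (cases "x = t")
  case False
  obtain z where z: "T z = Some y" "below T t z" using below_cases_child[OF ty(1)] ty(2) by blast
  have "x \<in> S" using elimination_tree_child_in[OF elim xy] .
  then have "below T t x \<or> below T x t"
    using elimination_tree_edge[OF elim t(1)] t(2) False by blast
  moreover have "x = z" if "below T x t"
    using elimination_tree_same_parent[OF elim xy z(1) below_trans[OF that z(2)]] .
  ultimately show ?thesis using z(2) by blast
qed simp

definition splice :: "'a \<Rightarrow> ('a \<Rightarrow> 'a option) \<Rightarrow> ('a \<Rightarrow> 'a option)" where
  "splice z T = (\<lambda>x. if x = z then None else if T x = Some z then T z else T x)"

lemma splice_below: "below (splice z T) a b \<Longrightarrow> below T a b"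
proof (induction rule: below_induct)
  case (step y y')
  have "below T y y'"
    using step.hyps(2) parent_below[of T y z y'] parent_below[of T y y' y'] parent_below[of T z y' y']
    by (auto simp: splice_def split: if_splits)
  then show ?case using below_trans[OF step.IH] by blast
qed simp

lemma below_splice:
  assumes "T z \<noteq> Some z" "below T a b" "a \<noteq> z" "b \<noteq> z"
  shows "below (splice z T) a b"
proof -
  have "(a \<noteq> z \<longrightarrow> below (splice z T) a b) \<and> (a = z \<longrightarrow> (\<forall>p. T a = Some p \<longrightarrow> below (splice z T) p b))"
    using assms(2)
  proof (induction rule: below_converse_induct)
    case (step x y)
    show ?case
    proof (intro conjI impI allI)
      assume "x \<noteq> z"
      show "below (splice z T) x b"
      proof (cases "y = z")
        case False
        then have "splice z T x = Some y" using step.hyps(1) \<open>x \<noteq> z\<close> by (simp add: splice_def)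
        moreover have "below (splice z T) y b" using step.IH False by blast
        ultimately show ?thesis by (rule parent_below)
      next
        case True
        then obtain p where p: "T z = Some p"
          using below_cases[OF step.hyps(2)] assms(4) by blast
        then have "splice z T x = Some p" using step.hyps(1) True \<open>x \<noteq> z\<close> by (simp add: splice_def)
        moreover have "below (splice z T) p b" using step.IH True p by blast
        ultimately show ?thesis by (rule parent_below)
      qed
    next
      fix p assume "x = z" "T x = Some p"
      then show "below (splice z T) p b" using step.hyps(1) step.IH assms(1) by auto
    qed
  qed (use assms(4) in simp)
  then show ?thesis using assms(3) by blast
qed

lemma subtree_splice:
  assumes "T z \<noteq> Some z" "x \<noteq> z"
  shows "subtree (splice z T) x = subtree T x - {z}"
proof -
  have "y \<noteq> z" if "below (splice z T) y x" for y
    using that assms(2) below_None_iff[of "splice z T" z x] by (auto simp: splice_def)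
  then show ?thesis
    using below_splice[where z = z and T = T and b = x, OF assms(1) _ _ assms(2)] splice_below[of z T _ x]
    by (auto simp: subtree_below)
qed

text \<open>Walks through \<open>b\<close> can be rerouted through \<open>a\<close>.\<close>
lemma connected_on_Diff_dominated:
  assumes conn: "connected_on E A" and a: "a \<in> A" "a \<noteq> b"
    and dom: "\<And>y. E b y \<Longrightarrow> y \<noteq> a \<Longrightarrow> E a y" "\<And>y. E y b \<Longrightarrow> y \<noteq> a \<Longrightarrow> E y a"
  shows "connected_on E (A - {b})"
proof -
  define f where "f y = (if y = b then a else y)" for y
  have f_in: "y \<in> A \<Longrightarrow> f y \<in> A - {b}" for y using a by (auto simp: f_def)
  have reroute: "reach_in E (A - {b}) (f x) (f y)" if "reach_in E A x y" "x \<in> A" for x y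
    using that(1) unfolding reach_in_def[of E A]
  proof (induction rule: rtranclp_induct)
    case base
    then show ?case by (simp add: reach_in_def)
  next
    case (step y z)
    show ?case
    proof (cases "f y = f z")
      case False
      then have "E (f y) (f z)" using step.hyps(2) dom by (auto simp: f_def)
      moreover have "f y \<in> A - {b}" "f z \<in> A - {b}" using f_in step.hyps(2) by auto
      ultimately show ?thesis using reach_in_step[OF step.IH] by blast
    qed (use step.IH in simp)
  qed
  show ?thesis
    unfolding connected_on_def
  proof (intro conjI ballI)
    fix x y assume xy: "x \<in> A - {b}" "y \<in> A - {b}"
    then have "reach_in E A x y" using conn by (simp add: connected_on_def)
    from reroute[OF this] show "reach_in E (A - {b}) x y" using xy by (simp add: f_def)
  qed (use a in blast)
qed

definition relabel_tree :: "('a \<Rightarrow> 'a) \<Rightarrow> ('a \<Rightarrow> 'a option) \<Rightarrow> ('a \<Rightarrow> 'a option)" where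
  "relabel_tree f T = map_option f \<circ> T \<circ> f"

context
  fixes f :: "'a \<Rightarrow> 'a"
  assumes involution: "\<And>x. f (f x) = x"
begin

lemma relabel_tree_Some: "relabel_tree f T a = Some b \<longleftrightarrow> T (f a) = Some (f b)"
  using involution by (cases "T (f a)") (auto simp: relabel_tree_def)

lemma relabel_tree_relabel_tree [simp]: "relabel_tree f (relabel_tree f T) = T"
  by (auto simp: relabel_tree_def involution option.map_comp comp_def option.map_ident)

lemma below_relabel_tree: "below (relabel_tree f T) a b \<longleftrightarrow> below T (f a) (f b)"
proof -
  have *: "below (relabel_tree f T) (f a) (f b)" if "below T a b" for T a b
    using that
  proof (induction rule: below_induct)
    case (step y z)
    then show ?case using below_parent relabel_tree_Some involution by metis
  qed simp
  show ?thesis using *[of T "f a" "f b"] *[of "relabel_tree f T" a b] involution by auto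
qed

lemma image_involution: "f ` A = {y. f y \<in> A}"
  using involution by (auto intro: image_eqI[of _ f, OF involution[symmetric]])

lemma subtree_relabel_tree: "subtree (relabel_tree f T) x = f ` subtree T (f x)"
  unfolding image_involution by (simp add: subtree_below below_relabel_tree)

lemma ancestors_relabel_tree: "ancestors (relabel_tree f T) x = f ` ancestors T (f x)"
  unfolding image_involution by (simp add: ancestors_def below_relabel_tree)

context
  fixes E :: "'a \<Rightarrow> 'a \<Rightarrow> bool"
  assumes automorphism: "\<And>a b. E (f a) (f b) = E a b"
begin

lemma elimination_tree_relabel_tree:
  assumes elim: "elimination_tree E S T" and S: "\<And>x. f x \<in> S \<longleftrightarrow> x \<in> S"
  shows "elimination_tree E S (relabel_tree f T)"
proof -
  obtain r where r: "r \<in> S" "T r = None" "\<forall>x\<in>S. below T x r"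
    using elimination_tree_root[OF elim] by blast
  show ?thesis
  proof (rule elimination_treeI[where r = "f r"])
    show "relabel_tree f T x = None" if "x \<notin> S" for x
      using that S elimination_tree_outside[OF elim, of "f x"] by (simp add: relabel_tree_def)
    show "y \<in> S" if "relabel_tree f T x = Some y" for x y
      using that S elimination_tree_parent_in[OF elim] by (metis relabel_tree_Some)
    show "f r \<in> S" using r(1) S by blast
    show "relabel_tree f T (f r) = None" using r(2) involution by (simp add: relabel_tree_def)
    show "below (relabel_tree f T) x (f r)" if "x \<in> S" for x
      using r(3) that S involution by (simp add: below_relabel_tree)
    show "below (relabel_tree f T) a b \<or> below (relabel_tree f T) b a"
      if "a \<in> S" "b \<in> S" "E a b" for a b
      using elimination_tree_edge[OF elim, of "f a" "f b"] that S automorphism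
      by (simp add: below_relabel_tree)
    show "connected_on E (subtree (relabel_tree f T) x)" if "x \<in> S" for x
      using connected_on_image[OF elimination_tree_subtree_connected[OF elim, of "f x"]] that S automorphism
      by (simp add: subtree_relabel_tree)
  qed
qed

lemma relabel_tree_rotate: "relabel_tree f (rotate E T u w) = rotate E (relabel_tree f T) (f u) (f w)"
proof
  fix x
  have test: "(\<exists>y\<in>subtree (relabel_tree f T) x. E (f u) y) \<longleftrightarrow> (\<exists>y\<in>subtree T (f x). E u y)"
    using automorphism involution by (auto simp: subtree_relabel_tree)
  consider "f x = w" | "f x \<noteq> w" "f x = u" | "f x \<noteq> w" "f x \<noteq> u" by blast
  then show "relabel_tree f (rotate E T u w) x = rotate E (relabel_tree f T) (f u) (f w) x"
  proof cases
    case 1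
    then have "x = f w" using involution by metis
    then show ?thesis using 1 involution by (simp add: relabel_tree_def rotate_def)
  next
    case 2
    then have "x = f u" "x \<noteq> f w" using involution by metis+
    then show ?thesis using 2 involution by (simp add: relabel_tree_def rotate_def)
  next
    case 3
    then have x: "x \<noteq> f u" "x \<noteq> f w" using involution by metis+
    show ?thesis
    proof (cases "T (f x) = Some w")
      case True
      then have "relabel_tree f T x = Some (f w)" using involution by (simp add: relabel_tree_Some)
      then show ?thesis
        using rotate_grandchild[of "f x" w u T E, OF 3 True] test
          rotate_grandchild[of x "f w" "f u" "relabel_tree f T" E, OF x(2,1)]
        by (simp add: relabel_tree_def)
    next
      case False
      then have "relabel_tree f T x \<noteq> Some (f w)" using involution by (simp add: relabel_tree_Some)
      then show ?thesis
        using rotate_other[of "f x" w u T E, OF 3 False]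
          rotate_other[of x "f w" "f u" "relabel_tree f T" E, OF x(2,1)]
        by (simp add: relabel_tree_def)
    qed
  qed
qed

end

end

section \<open>Twins of a universal vertex\<close>

locale universal_twin =
  fixes V :: "'a set" and E :: "'a \<Rightarrow> 'a \<Rightarrow> bool" and v v' :: 'a
  assumes simple: "simple_graph V E" and v_in: "v \<in> V"
    and universal: "\<forall>x\<in>V. x \<noteq> v \<longrightarrow> E v x" and fresh: "v' \<notin> V"
begin

abbreviation Ev :: "'a \<Rightarrow> 'a \<Rightarrow> bool" where "Ev \<equiv> add_twin E v v'"
abbreviation Vv :: "'a set" where "Vv \<equiv> insert v' V"
abbreviation sw :: "'a \<Rightarrow> 'a" where "sw \<equiv> Transposition.transpose v v'"

lemma finite_V: "finite V"
  using simple by (simp add: simple_graph_def)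

lemma E_sym: "E a b \<Longrightarrow> E b a"
  using simple by (simp add: simple_graph_def)

lemma E_in: "E a b \<Longrightarrow> a \<in> V \<and> b \<in> V"
  using simple by (simp add: simple_graph_def)

lemma v_neq_v': "v \<noteq> v'"
  using v_in fresh by blast

lemma Ev_eq_E: "a \<in> V \<Longrightarrow> b \<in> V \<Longrightarrow> Ev a b = E a b"
  using fresh by (auto simp: add_twin_def)

lemma Ev_sym: "Ev a b \<Longrightarrow> Ev b a"
  using E_sym by (auto simp: add_twin_def)

lemma Ev_v': "x \<in> V \<Longrightarrow> Ev v' x"
  using universal by (auto simp: add_twin_def)

lemma Ev_v: "x \<in> Vv \<Longrightarrow> x \<noteq> v \<Longrightarrow> Ev v x"
  using universal by (auto simp: add_twin_def)

lemma Ev_v_v': "Ev v v'"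
  by (simp add: add_twin_def)

lemma Ev_twins: "b \<noteq> v \<Longrightarrow> b \<noteq> v' \<Longrightarrow> Ev v b = Ev v' b"
  using E_in fresh v_neq_v' by (auto simp: add_twin_def)

lemma Ev_transpose: "Ev (sw a) (sw b) = Ev a b"
proof -
  have irrefl: "\<not> Ev a a" for a
    using simple E_in fresh v_neq_v' by (auto simp: add_twin_def simple_graph_def)
  consider "a = v" | "a = v'" | "a \<noteq> v" "a \<noteq> v'" by blast
  then show ?thesis
    using irrefl Ev_v_v' Ev_sym Ev_twins v_neq_v'
    by cases (cases "b = v \<or> b = v'"; metis transpose_def)+
qed

lemma transpose_in_Vv: "sw x \<in> Vv \<longleftrightarrow> x \<in> Vv"
  using v_in by (auto simp: transpose_def)

lemma connected_on_Vv: "connected_on Ev Vv"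
  by (rule connected_on_universal[of v']) (use Ev_v' Ev_sym in blast)+

lemma connected_on_V: "v \<in> B \<Longrightarrow> B \<subseteq> V \<Longrightarrow> connected_on E B"
  by (rule connected_on_universal[of v]) (use universal E_sym in blast)+

lemma connected_on_delete_v':
  assumes "connected_on Ev A" "v \<in> A"
  shows "connected_on Ev (A - {v'})"
proof (rule connected_on_Diff_dominated[OF assms v_neq_v'])
  have irrefl: "\<not> Ev v' v'" using fresh E_in v_neq_v' by (auto simp: add_twin_def)
  show "Ev v y" if "Ev v' y" "y \<noteq> v" for y
    using that irrefl Ev_twins by metis
  show "Ev y v" if "Ev y v'" "y \<noteq> v" for y
    using that irrefl Ev_twins Ev_sym by metis
qed

lemma below_relabel_twins: "below (relabel_tree sw T) v v' \<longleftrightarrow> below T v' v"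
  by (simp add: below_relabel_tree)

context
  fixes T
  assumes elim: "elimination_tree Ev Vv T"
begin

lemma below_v_child: "below T v y \<Longrightarrow> v \<noteq> y \<Longrightarrow> T x = Some y \<Longrightarrow> below T v x"
  using elimination_tree_universal_below_child[OF elim, of v] v_in Ev_v by blast

lemma below_v'_child: "below T v' y \<Longrightarrow> v' \<noteq> y \<Longrightarrow> T x = Some y \<Longrightarrow> below T v' x"
  using elimination_tree_universal_below_child[OF elim, of v'] Ev_v' by blast

lemma twins_comparable: "below T v v' \<or> below T v' v"
  using elimination_tree_edge[OF elim _ _ Ev_v_v'] v_in by blast

lemma elimination_tree_relabel_twins: "elimination_tree Ev Vv (relabel_tree sw T)"
  using elimination_tree_relabel_tree[OF _ _ elim] Ev_transpose transpose_in_Vv by simp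

context
  assumes v'_above: "below T v v'"
begin

lemma v'_not_below_v: "\<not> below T v' v"
  using elimination_tree_antisym[OF elim v'_above] v_neq_v' by blast

lemma child_of_v'_above_v: "T x = Some v' \<Longrightarrow> below T v x"
  using below_v_child[OF v'_above v_neq_v'] .

lemma child_of_v'_unique: "T x = Some v' \<Longrightarrow> T y = Some v' \<Longrightarrow> x = y"
  using child_of_v'_above_v below_linear[of T v x y] elimination_tree_same_parent[OF elim]
  by metis

lemma child_of_v'_exists:
  obtains c where "T c = Some v'" "below T v c"
  using below_cases_child[OF v'_above] v_neq_v' by blast

lemma splice_v'_root: "\<exists>\<rho>\<in>V. splice v' T \<rho> = None \<and> (\<forall>x\<in>V. below (splice v' T) x \<rho>)"
proof -
  have no_loop: "T v' \<noteq> Some v'" using elimination_tree_no_loop[OF elim] .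
  note below_splice_v' = below_splice[where z = v' and T = T, OF no_loop]
  obtain r where r: "r \<in> Vv" "T r = None" "\<forall>x\<in>Vv. below T x r"
    using elimination_tree_root[OF elim] by blast
  show ?thesis
  proof (cases "r = v'")
    case False
    then have "r \<in> V" "splice v' T r = None" using r(1,2) by (auto simp: splice_def)
    moreover have "below (splice v' T) x r" if "x \<in> V" for x
      using below_splice_v'[where b = r, OF _ _ False] r(3) that fresh by blast
    ultimately show ?thesis by blast
  next
    case True
    obtain c where c: "T c = Some v'" "below T v c" by (rule child_of_v'_exists)
    have c_V: "c \<in> V" using elimination_tree_child_in[OF elim c(1)] no_loop c(1) by auto
    have "splice v' T c = None" using c(1) True r(2) c_V fresh by (auto simp: splice_def)
    moreover have "below (splice v' T) x c" if x: "x \<in> V" for x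
    proof -
      have "x \<noteq> v'" using x fresh by blast
      moreover have "below T x v'" using r(3) x True by blast
      ultimately obtain c' where "T c' = Some v'" "below T x c'"
        using below_cases_child[of T x v'] by blast
      then have "below T x c" using child_of_v'_unique[OF _ c(1)] by blast
      moreover have "c \<noteq> v'" using c_V fresh by blast
      ultimately show ?thesis using below_splice_v'[OF _ \<open>x \<noteq> v'\<close>] by blast
    qed
    ultimately show ?thesis using c_V by blast
  qed
qed

lemma connected_on_subtree_splice_v':
  assumes x: "x \<in> V"
  shows "connected_on E (subtree (splice v' T) x)"
proof -
  have "x \<noteq> v'" using x fresh by blast
  have conn: "connected_on Ev (subtree T x)"
    using elimination_tree_subtree_connected[OF elim] x by blast
  have "connected_on Ev (subtree T x - {v'})"
  proof (cases "v' \<in> subtree T x")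
    case True
    then have "v \<in> subtree T x" using below_trans[OF v'_above] by (simp add: subtree_below)
    then show ?thesis using connected_on_delete_v'[OF conn] by blast
  qed (use conn in simp)
  moreover have "subtree T x - {v'} \<subseteq> V"
    using elimination_tree_subtree_subset[OF elim] x by blast
  ultimately have "connected_on E (subtree T x - {v'})"
    using connected_on_cong[of "subtree T x - {v'}" Ev E] Ev_eq_E by blast
  then show ?thesis
    using subtree_splice[where z = v' and T = T, OF elimination_tree_no_loop[OF elim] \<open>x \<noteq> v'\<close>]
    by simp
qed

lemma elimination_tree_splice_v': "elimination_tree E V (splice v' T)"
proof -
  have no_loop: "T v' \<noteq> Some v'" using elimination_tree_no_loop[OF elim] .
  note below_splice_v' = below_splice[where z = v' and T = T, OF no_loop]
  obtain \<rho> where \<rho>: "\<rho> \<in> V" "splice v' T \<rho> = None" "\<forall>x\<in>V. below (splice v' T) x \<rho>"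
    using splice_v'_root by blast
  show ?thesis
  proof (rule elimination_treeI[where r = \<rho>])
    show "splice v' T x = None" if "x \<notin> V" for x
      using that elimination_tree_outside[OF elim, of x] by (auto simp: splice_def)
    show "y \<in> V" if "splice v' T x = Some y" for x y
    proof -
      have "y \<noteq> v'" "y \<in> Vv"
        using that no_loop elimination_tree_parent_in[OF elim]
        by (auto simp: splice_def split: if_splits)
      then show ?thesis by blast
    qed
    show "below (splice v' T) a b \<or> below (splice v' T) b a" if "a \<in> V" "b \<in> V" "E a b" for a b
    proof -
      have "below T a b \<or> below T b a"
        using elimination_tree_edge[OF elim, of a b] that Ev_eq_E by blast
      moreover have "a \<noteq> v'" "b \<noteq> v'" using that fresh by auto
      ultimately show ?thesis
        using below_splice_v'[OF _ \<open>a \<noteq> v'\<close> \<open>b \<noteq> v'\<close>]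
          below_splice_v'[OF _ \<open>b \<noteq> v'\<close> \<open>a \<noteq> v'\<close>] by blast
    qed
  qed (use \<rho> connected_on_subtree_splice_v' in auto)
qed

lemma rotate_v'_v:
  assumes "T v = Some v'"
  shows "rotate Ev T v' v = relabel_tree sw T"
proof
  fix x
  have T_v': "T v' \<noteq> Some v" "T v' \<noteq> Some v'"
    using elimination_tree_parent_asym[OF elim assms] elimination_tree_no_loop[OF elim] by auto
  consider "x = v" | "x = v'" | "x \<noteq> v" "x \<noteq> v'" by blast
  then show "rotate Ev T v' v x = relabel_tree sw T x"
  proof cases
    case 1
    then show ?thesis using T_v' by (cases "T v'") (auto simp: rotate_child relabel_tree_def)
  next
    case 2
    then show ?thesis using assms v_neq_v' by (simp add: rotate_parent relabel_tree_def)
  next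
    case 3
    show ?thesis
    proof (cases "T x = Some v")
      case True
      have "x \<in> V" using elimination_tree_child_in[OF elim True] 3 by blast
      moreover have "x \<in> subtree T x" by (simp add: subtree_below)
      ultimately have "\<exists>y\<in>subtree T x. Ev v' y" using Ev_v' by blast
      then show ?thesis
        using 3 True rotate_grandchild[of x v v' T Ev] by (simp add: relabel_tree_def)
    next
      case False
      have "T x \<noteq> Some v'" using child_of_v'_unique[OF _ assms] 3 by blast
      then have "map_option sw (T x) = T x" using False by (cases "T x") auto
      then show ?thesis using 3 False rotate_other[of x v v' T Ev] by (simp add: relabel_tree_def)
    qed
  qed
qed

context
  fixes u c
  assumes u: "T v' = Some u" and c: "T c = Some v'"
begin

lemma rotate_v'_up_values:
  shows "rotate Ev T u v' c = Some u" and "rotate Ev T u v' u = Some v'"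
    and "x \<noteq> v' \<Longrightarrow> x \<noteq> u \<Longrightarrow> x \<noteq> c \<Longrightarrow> rotate Ev T u v' x = T x"
proof -
  have "u \<noteq> v" using u v'_not_below_v parent_below[of T v' u v] by auto
  have uv': "u \<noteq> v'" using elimination_tree_no_loop[OF elim] u by blast
  have cv': "c \<noteq> v'" using elimination_tree_no_loop[OF elim] c by blast
  have cu: "c \<noteq> u" using elimination_tree_parent_asym[OF elim c] u by blast
  have "Ev u v" using Ev_v[OF elimination_tree_parent_in[OF elim u] \<open>u \<noteq> v\<close>] Ev_sym by blast
  then have "\<exists>y\<in>subtree T c. Ev u y" using child_of_v'_above_v[OF c] by (auto simp: subtree_below)
  then show "rotate Ev T u v' c = Some u"
    using rotate_grandchild[of c v' u T Ev, OF cv' cu c] by simp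
  show "rotate Ev T u v' u = Some v'" using rotate_parent[OF uv'] .
  show "x \<noteq> v' \<Longrightarrow> x \<noteq> u \<Longrightarrow> x \<noteq> c \<Longrightarrow> rotate Ev T u v' x = T x"
    using rotate_other[of x v' u T Ev] child_of_v'_unique[OF _ c] by blast
qed

lemma below_rotate_v'_up: "below (rotate Ev T u v') v v'"
proof -
  have "below (rotate Ev T u v') v c"
  proof (rule below_agree[OF child_of_v'_above_v[OF c]])
    fix y assume y: "below T v y" "below T y c" "y \<noteq> c"
    have "y \<noteq> v'" using elimination_tree_acyclic[OF elim c] y(2) by blast
    moreover have "y \<noteq> u"
    proof
      assume "y = u"
      then have "below T c y" using c u parent_below[of T c v' u] parent_below[of T v' u u] by simp
      then show False using elimination_tree_antisym[OF elim y(2)] y(3) by blast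
    qed
    ultimately show "rotate Ev T u v' y = T y" using rotate_v'_up_values(3) y(3) by blast
  qed
  from below_parent[OF below_parent[OF this rotate_v'_up_values(1)] rotate_v'_up_values(2)]
  show ?thesis .
qed

lemma splice_rotate_v'_up: "splice v' (rotate Ev T u v') = splice v' T"
proof
  fix x
  have uv': "u \<noteq> v'" and cv': "c \<noteq> v'" using elimination_tree_no_loop[OF elim] u c by auto
  have "T u \<noteq> Some v'" using elimination_tree_parent_asym[OF elim u] .
  consider "x = v'" | "x = u" | "x = c" | "x \<noteq> v'" "x \<noteq> u" "x \<noteq> c" by blast
  then show "splice v' (rotate Ev T u v') x = splice v' T x"
  proof cases
    case 2
    then show ?thesis
      using rotate_v'_up_values(2) uv' \<open>T u \<noteq> Some v'\<close> by (simp add: splice_def rotate_child)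
  next
    case 3
    then show ?thesis using rotate_v'_up_values(1) c u cv' uv' by (simp add: splice_def)
  next
    case 4
    then have "T x \<noteq> Some v'" using child_of_v'_unique[OF _ c] by blast
    then show ?thesis using rotate_v'_up_values(3)[OF 4] 4 by (simp add: splice_def)
  qed (simp add: splice_def)
qed

end

context
  fixes c
  assumes c: "T c = Some v'" "c \<noteq> v"
begin

lemma rotate_v'_down_grandchild:
  assumes x: "T x = Some c" shows "rotate Ev T v' c x = Some v'"
proof -
  have "x \<noteq> c" using elimination_tree_no_loop[OF elim] x by blast
  have "x \<noteq> v'" using elimination_tree_parent_asym[OF elim x] c(1) by blast
  then have "x \<in> V" using elimination_tree_child_in[OF elim x] by blast
  moreover have "x \<in> subtree T x" by (simp add: subtree_below)
  ultimately have "\<exists>y\<in>subtree T x. Ev v' y" using Ev_v' by blast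
  then show ?thesis using rotate_grandchild[of x c v' T Ev] x \<open>x \<noteq> c\<close> \<open>x \<noteq> v'\<close> by simp
qed

lemma below_rotate_v'_down: "below (rotate Ev T v' c) v v'"
proof -
  obtain x0 where x0: "T x0 = Some c" "below T v x0"
    using below_cases_child[OF child_of_v'_above_v[OF c(1)]] c(2) by blast
  have "below (rotate Ev T v' c) v x0"
  proof (rule below_agree[OF x0(2)])
    fix y assume y: "below T v y" "below T y x0" "y \<noteq> x0"
    have "y \<noteq> c" using elimination_tree_acyclic[OF elim x0(1)] y(2) by blast
    moreover have "y \<noteq> v'"
    proof
      assume "y = v'"
      have "below T x0 v'"
        using x0(1) c(1) parent_below[of T x0 c v'] parent_below[of T c v' v'] by simp
      then show False using elimination_tree_antisym[OF elim] y(2,3) \<open>y = v'\<close> by blast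
    qed
    moreover have "T y \<noteq> Some c"
      using elimination_tree_same_parent[OF elim _ x0(1) y(2)] y(3) by blast
    ultimately show "rotate Ev T v' c y = T y" using rotate_other[of y c v' T Ev] by blast
  qed
  from below_parent[OF this rotate_v'_down_grandchild[OF x0(1)]] show ?thesis .
qed

lemma splice_rotate_v'_down: "splice v' (rotate Ev T v' c) = splice v' T"
proof
  fix x
  have cv': "c \<noteq> v'" and no_loop: "T v' \<noteq> Some v'"
    using elimination_tree_no_loop[OF elim] c(1) by auto
  consider "x = v'" | "x = c" | "x \<noteq> v'" "x \<noteq> c" "T x = Some c"
    | "x \<noteq> v'" "x \<noteq> c" "T x \<noteq> Some c" by blast
  then show "splice v' (rotate Ev T v' c) x = splice v' T x"
  proof cases
    case 2
    then show ?thesis using c(1) cv' no_loop by (simp add: splice_def rotate_child)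
  next
    case 3
    then show ?thesis
      using rotate_v'_down_grandchild[OF 3(3)] rotate_parent[of v' c Ev T] cv'
      by (simp add: splice_def)
  next
    case 4
    then have "T x \<noteq> Some v'" using child_of_v'_unique[OF _ c(1)] by blast
    then show ?thesis using rotate_other[of x c v' T Ev] 4 by (simp add: splice_def)
  qed (simp add: splice_def)
qed

end

context
  fixes u w
  assumes wu: "T w = Some u" and uv': "u \<noteq> v'" and wv': "w \<noteq> v'"
begin

lemma u_in_V: "u \<in> V"
  using elimination_tree_parent_in[OF elim wu] uv' by blast

lemma E_u_v: "u \<noteq> v \<Longrightarrow> E u v"
  using universal u_in_V E_sym by blast

lemma rotation_test_splice_v':
  assumes x: "x \<noteq> v'" "T x = Some w"
  shows "(\<exists>y\<in>subtree (splice v' T) x. E u y) \<longleftrightarrow> (\<exists>y\<in>subtree T x. Ev u y)"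
proof -
  have no_loop: "T v' \<noteq> Some v'" using elimination_tree_no_loop[OF elim] .
  have sub: "subtree (splice v' T) x = subtree T x - {v'}"
    using subtree_splice[where z = v' and T = T, OF no_loop x(1)] .
  have sub_Vv: "subtree T x \<subseteq> Vv"
    using elimination_tree_subtree_subset[OF elim elimination_tree_child_in[OF elim x(2)]] .
  show ?thesis
  proof
    assume "\<exists>y\<in>subtree (splice v' T) x. E u y"
    then show "\<exists>y\<in>subtree T x. Ev u y" using sub by (auto simp: add_twin_def)
  next
    assume "\<exists>y\<in>subtree T x. Ev u y"
    then obtain y where y: "y \<in> subtree T x" "Ev u y" by blast
    show "\<exists>y\<in>subtree (splice v' T) x. E u y"
    proof (cases "y = v'")
      case False
      then have "E u y" using y sub_Vv Ev_eq_E[OF u_in_V] by auto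
      then show ?thesis using y(1) False sub by blast
    next
      case True
      then have v'x: "below T v' x" using y(1) by (simp add: subtree_below)
      have "u \<noteq> v"
        using v'_not_below_v below_parent[OF below_parent[OF v'x x(2)] wu] by blast
      moreover have "v \<in> subtree (splice v' T) x"
        using below_trans[OF v'_above v'x] v_neq_v' sub by (simp add: subtree_below)
      ultimately show ?thesis using E_u_v by blast
    qed
  qed
qed

lemma splice_rotate_at_child_of_v':
  assumes x: "T x = Some v'" "x \<noteq> w" "x \<noteq> u"
  shows "splice v' (rotate Ev T u w) x = rotate E (splice v' T) u w x"
proof -
  have "x \<noteq> v'" using elimination_tree_no_loop[OF elim] x(1) by blast
  have T'x: "rotate Ev T u w x = Some v'" using rotate_other[of x w u T Ev] x wv' by simp
  show ?thesis
  proof (cases "T v' = Some w")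
    case True
    have "u \<noteq> v"
      using v'_not_below_v parent_below[of T v' w u] parent_below[of T w u u] True wu by auto
    have "v \<in> subtree T v'" using v'_above by (simp add: subtree_below)
    then have "rotate Ev T u w v' = Some u"
      using rotate_grandchild[of v' w u T Ev] uv' wv' True Ev_eq_E E_u_v[OF \<open>u \<noteq> v\<close>] u_in_V v_in
      by fastforce
    moreover have "v \<in> subtree (splice v' T) x"
      using child_of_v'_above_v[OF x(1)] subtree_splice[where z = v' and T = T, OF _ \<open>x \<noteq> v'\<close>]
        elimination_tree_no_loop[OF elim] v_neq_v' by (simp add: subtree_below)
    then have "rotate E (splice v' T) u w x = Some u"
      using rotate_grandchild[of x w u "splice v' T" E] x \<open>x \<noteq> v'\<close> True E_u_v[OF \<open>u \<noteq> v\<close>]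
      by (auto simp: splice_def)
    ultimately show ?thesis using T'x \<open>x \<noteq> v'\<close> by (simp add: splice_def)
  next
    case False
    then have "rotate Ev T u w v' = T v'" using rotate_other[of v' w u T Ev] uv' wv' by metis
    then show ?thesis
      using T'x x \<open>x \<noteq> v'\<close> False rotate_other[of x w u "splice v' T" E] by (simp add: splice_def)
  qed
qed

lemma splice_rotate_avoiding_v': "splice v' (rotate Ev T u w) = rotate E (splice v' T) u w"
proof
  fix x
  have uw: "u \<noteq> w" using elimination_tree_no_loop[OF elim] wu by blast
  consider "x = v'" | "x = w" | "x = u" | "x \<noteq> v'" "x \<noteq> w" "x \<noteq> u" "T x = Some w"
    | "x \<noteq> w" "x \<noteq> u" "T x = Some v'"
    | "x \<noteq> v'" "x \<noteq> w" "x \<noteq> u" "T x \<noteq> Some w" "T x \<noteq> Some v'" by blast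
  then show "splice v' (rotate Ev T u w) x = rotate E (splice v' T) u w x"
  proof cases
    case 1
    then show ?thesis using uv' wv' by (simp add: splice_def rotate_def)
  next
    case 2
    have "T v' \<noteq> Some w" if "T u = Some v'"
      using elimination_tree_acyclic[OF elim wu] parent_below[of T u v' w] parent_below[of T v' w w] that
      by auto
    then have "rotate Ev T u w v' = T v'" if "T u = Some v'"
      using rotate_other[of v' w u T Ev] uv' wv' that by metis
    then show ?thesis using 2 wv' uv' by (simp add: splice_def rotate_child)
  next
    case 3
    then show ?thesis using uw uv' wv' by (simp add: splice_def rotate_parent)
  next
    case 4
    then show ?thesis
      using rotate_grandchild[of x w u T Ev] rotation_test_splice_v'[OF 4(1,4)] uv' wv'
        rotate_grandchild[of x w u "splice v' T" E] by (simp add: splice_def)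
  next
    case 5
    show ?thesis using splice_rotate_at_child_of_v'[OF 5(3,1,2)] .
  next
    case 6
    then show ?thesis
      using rotate_other[of x w u T Ev] rotate_other[of x w u "splice v' T" E]
      by (simp add: splice_def)
  qed
qed

lemma ancestors_rotate_avoiding_v': "ancestors (rotate Ev T u w) v' = ancestors T v'"
proof (cases "u \<in> ancestors T v'")
  case False
  show ?thesis
  proof (rule ancestors_agree)
    fix y assume y: "y \<in> ancestors T v'"
    have "y \<noteq> w" "T y \<noteq> Some w"
      using y False below_parent[of T v' w u] below_parent[of T v' y w] wu
      by (auto simp: ancestors_def)
    moreover have "y \<noteq> u" using y False by blast
    ultimately show "rotate Ev T u w y = T y" using rotate_other by metis
  qed
next
  case True
  let ?T = "rotate Ev T u w"
  have "below T v' u" using True by (simp add: ancestors_def)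
  then have "below T v' w" using below_v'_child[OF _ uv'[symmetric] wu] by blast
  then obtain x0 where x0: "T x0 = Some w" "below T v' x0" using below_cases_child wv' by metis
  have x0_w: "below T x0 w" and x0_u: "below T x0 u"
    using x0(1) wu parent_below[of T x0 w] parent_below[of T w u] by auto
  have "x0 \<noteq> w" "x0 \<noteq> u"
    using elimination_tree_no_loop[OF elim] elimination_tree_parent_asym[OF elim x0(1)] x0(1) wu
    by auto
  have "u \<noteq> v" using v'_not_below_v \<open>below T v' u\<close> by blast
  then have "\<exists>y\<in>subtree T x0. Ev u y"
    using below_trans[OF v'_above x0(2)] E_u_v Ev_eq_E u_in_V v_in by (auto simp: subtree_below)
  then have T'x0: "?T x0 = Some u"
    using rotate_grandchild[of x0 w u T Ev] \<open>x0 \<noteq> w\<close> \<open>x0 \<noteq> u\<close> x0(1) by simp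
  have agree: "?T z = T z" if "below T v' z" "below T z x0" "z \<noteq> x0" for z
  proof -
    have "z \<noteq> u" using elimination_tree_antisym[OF elim x0_u] that(2,3) by blast
    moreover have "z \<noteq> w" using elimination_tree_antisym[OF elim x0_w] that(2,3) by blast
    moreover have "T z \<noteq> Some w"
      using elimination_tree_same_parent[OF elim _ x0(1) that(2)] that(3) by blast
    ultimately show ?thesis using rotate_other by metis
  qed
  have "ancestors ?T x0 = insert x0 (ancestors T x0 - {x0})"
    using ancestors_unfold[of ?T x0] ancestors_unfold[of T x0] ancestors_unfold[of T w]
      ancestors_rotate[OF elim wu] T'x0 x0(1) by (auto simp: ancestors_opt_def)
  also have "\<dots> = ancestors T x0" by (auto simp: ancestors_def)
  finally show ?thesis
    using ancestors_segment[OF elim x0(2) agree] ancestors_segment[OF elim x0(2), of T] by simp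
qed

lemma below_rotate_avoiding_v':
  assumes "elimination_tree Ev Vv (rotate Ev T u w)"
  shows "below (rotate Ev T u w) v v'"
proof -
  have "\<not> below (rotate Ev T u w) v' v"
    using ancestors_rotate_avoiding_v' v'_not_below_v by (auto simp: ancestors_def)
  then show ?thesis using elimination_tree_edge[OF assms _ _ Ev_v_v'] v_in by blast
qed
end

end

end

lemma card_transpose_image: "card (sw ` A) = card A"
  by (simp add: card_image)

definition merge_twins :: "('a \<Rightarrow> 'a option) \<Rightarrow> ('a \<Rightarrow> 'a option)" where
  "merge_twins T = (if below T v v' then splice v' T else splice v' (relabel_tree sw T))"

text \<open>The parity of the depth of the upper twin, shifted by one if that twin is \<open>v\<close> so that
  exchanging the twins changes it.\<close>
definition twin_parity :: "('a \<Rightarrow> 'a option) \<Rightarrow> nat" where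
  "twin_parity T =
    (if below T v v' then card (ancestors T v') mod 2 else Suc (card (ancestors T v)) mod 2)"

lemma twin_parity_less_2: "twin_parity T < 2"
  by (simp add: twin_parity_def)

context
  fixes T
  assumes elim: "elimination_tree Ev Vv T"
begin

lemma merge_twins_relabel: "merge_twins (relabel_tree sw T) = merge_twins T"
  using twins_comparable[OF elim] v'_not_below_v[OF elim]
  by (auto simp: merge_twins_def below_relabel_twins)

lemma twin_parity_relabel: "twin_parity (relabel_tree sw T) \<noteq> twin_parity T"
proof (cases "below T v v'")
  case True
  then show ?thesis
    using v'_not_below_v[OF elim True]
    by (simp add: twin_parity_def below_relabel_twins ancestors_relabel_tree card_transpose_image)
      presburger
next
  case False
  then have "below T v' v" using twins_comparable[OF elim] by blast
  then show ?thesis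
    using False
    by (simp add: twin_parity_def below_relabel_twins ancestors_relabel_tree card_transpose_image)
      presburger
qed

lemma elimination_tree_merge_twins: "elimination_tree E V (merge_twins T)"
proof (cases "below T v v'")
  case True
  then show ?thesis using elimination_tree_splice_v'[OF elim] by (simp add: merge_twins_def)
next
  case False
  then have "below (relabel_tree sw T) v v'"
    using twins_comparable[OF elim] below_relabel_twins by blast
  then show ?thesis
    using elimination_tree_splice_v'[OF elimination_tree_relabel_twins[OF elim]] False
    by (simp add: merge_twins_def)
qed

end

lemma prism_adj_twin_depth_change:
  assumes "below T v v'" "below T' v v'" "splice v' T' = splice v' T"
    and "card (ancestors T v') = Suc (card (ancestors T' v')) \<or>
      card (ancestors T' v') = Suc (card (ancestors T v'))"
  shows "prism_adj (rot_adj E) (merge_twins T, twin_parity T) (merge_twins T', twin_parity T')"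
proof -
  have "card (ancestors T v') mod 2 \<noteq> card (ancestors T' v') mod 2" using assms(4) by presburger
  then show ?thesis using assms(1-3) by (simp add: prism_adj_def merge_twins_def twin_parity_def)
qed

lemma rotation_merge_twins_above:
  assumes elim: "elimination_tree Ev Vv T" and elim': "elimination_tree Ev Vv (rotate Ev T u w)"
    and v'_above: "below T v v'" and wu: "T w = Some u"
  shows "prism_adj (rot_adj E) (merge_twins T, twin_parity T)
           (merge_twins (rotate Ev T u w), twin_parity (rotate Ev T u w))"
proof -
  let ?T = "rotate Ev T u w"
  have "u \<noteq> w" using elimination_tree_no_loop[OF elim] wu by blast
  consider "u = v'" "w = v" | "w = v'" | "u = v'" "w \<noteq> v" | "u \<noteq> v'" "w \<noteq> v'"
    using \<open>u \<noteq> w\<close> by blast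
  then show ?thesis
  proof cases
    case 1
    then have "?T = relabel_tree sw T" using rotate_v'_v[OF elim v'_above] wu by simp
    then show ?thesis
      using merge_twins_relabel[OF elim] twin_parity_relabel[OF elim] by (simp add: prism_adj_def)
  next
    case 2
    obtain c where "T c = Some v'" using child_of_v'_exists[OF elim v'_above] by blast
    then have "below ?T v v'" "splice v' ?T = splice v' T"
      using below_rotate_v'_up[OF elim v'_above] splice_rotate_v'_up[OF elim v'_above] wu 2
      by simp_all
    moreover have "card (ancestors T v') = Suc (card (ancestors ?T v'))"
      using card_ancestors_rotate(1)[OF elim wu] finite_V 2 by simp
    ultimately show ?thesis using prism_adj_twin_depth_change[OF v'_above] by blast
  next
    case 3
    then have "below ?T v v'" "splice v' ?T = splice v' T"
      using below_rotate_v'_down[OF elim v'_above] splice_rotate_v'_down[OF elim v'_above] wu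
      by simp_all
    moreover have "card (ancestors ?T v') = Suc (card (ancestors T v'))"
      using card_ancestors_rotate(2)[OF elim wu] finite_V 3 by simp
    ultimately show ?thesis using prism_adj_twin_depth_change[OF v'_above] by blast
  next
    case 4
    have anc: "ancestors ?T v' = ancestors T v'"
      using ancestors_rotate_avoiding_v'[OF elim v'_above wu 4] .
    have "below ?T v v'" using below_rotate_avoiding_v'[OF elim v'_above wu 4 elim'] .
    moreover have "rot_step E (splice v' T) (splice v' ?T)"
    proof -
      have "splice v' T w = Some u" using wu 4 by (simp add: splice_def)
      then show ?thesis
        unfolding rot_step_def using splice_rotate_avoiding_v'[OF elim v'_above wu 4] by blast
    qed
    ultimately show ?thesis
      using v'_above anc by (simp add: prism_adj_def merge_twins_def twin_parity_def rot_adj_def)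
  qed
qed

lemma rotation_merge_twins:
  assumes elim: "elimination_tree Ev Vv T" "elimination_tree Ev Vv T'" and "rot_step Ev T T'"
  shows "prism_adj (rot_adj E) (merge_twins T, twin_parity T) (merge_twins T', twin_parity T')"
proof -
  obtain u w where wu: "T w = Some u" and T': "T' = rotate Ev T u w"
    using assms(3) unfolding rot_step_def by blast
  show ?thesis
  proof (cases "below T v v'")
    case True
    then show ?thesis using rotation_merge_twins_above[OF elim(1)] elim(2) wu T' by blast
  next
    case False
    let ?R = "relabel_tree sw"
    have elim_R: "elimination_tree Ev Vv (?R T)" "elimination_tree Ev Vv (?R T')"
      using elimination_tree_relabel_twins elim by blast+
    have "below (?R T) v v'"
      using False twins_comparable[OF elim(1)] below_relabel_twins by blast
    moreover have "?R T (sw w) = Some (sw u)" using wu by (simp add: relabel_tree_Some)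
    moreover have R_T': "?R T' = rotate Ev (?R T) (sw u) (sw w)"
      using T' relabel_tree_rotate[of sw Ev] Ev_transpose by simp
    ultimately have "prism_adj (rot_adj E) (merge_twins (?R T), twin_parity (?R T))
        (merge_twins (?R T'), twin_parity (?R T'))"
      using rotation_merge_twins_above[OF elim_R(1)] elim_R(2) by simp
    moreover have "twin_parity (?R T) = twin_parity (?R T') \<longleftrightarrow> twin_parity T = twin_parity T'"
      using twin_parity_relabel[OF elim(1)] twin_parity_relabel[OF elim(2)]
        twin_parity_less_2[of T] twin_parity_less_2[of T'] twin_parity_less_2[of "?R T"]
        twin_parity_less_2[of "?R T'"] by linarith
    ultimately show ?thesis using merge_twins_relabel[OF elim(1)] merge_twins_relabel[OF elim(2)]
      by (simp add: prism_adj_def)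
  qed
qed

lemma rot_vertices_V: "rot_vertices V E = {T. elimination_tree E V T}"
  using rot_vertices_eq[of V E] finite_V E_sym by blast

lemma rot_vertices_Vv: "rot_vertices Vv Ev = {T. elimination_tree Ev Vv T}"
  using rot_vertices_eq[of Vv Ev] finite_V Ev_sym by blast

lemma chromatic_number_le_twin:
  "chromatic_number (rot_vertices V E) (rot_adj E)
     \<le> chromatic_number (rot_vertices Vv Ev) (rot_adj Ev)"
proof (rule chromatic_number_le[OF colorable_hom[where f = "add_root v' V"]])
  show "colorable (rot_vertices Vv Ev) (rot_adj Ev) (chromatic_number (rot_vertices Vv Ev) (rot_adj Ev))"
    using colorable_rot_graph[of Vv Ev] finite_V Ev_sym by blast
  have elim_Ev: "elimination_tree Ev V T" if "elimination_tree E V T" for T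
    using elimination_tree_cong[OF that] Ev_eq_E by metis
  show "add_root v' V ` rot_vertices V E \<subseteq> rot_vertices Vv Ev"
    using elimination_tree_add_root[OF elim_Ev fresh connected_on_Vv]
    by (auto simp: rot_vertices_V rot_vertices_Vv)
  have "rot_step Ev (add_root v' V T) (add_root v' V T')"
    if elim: "elimination_tree E V T" and step: "rot_step E T T'" for T T'
  proof -
    obtain u w where wu: "T w = Some u" and T': "T' = rotate E T u w"
      using step unfolding rot_step_def by blast
    have "add_root v' V T w = Some u"
      using elimination_tree_child_in[OF elim wu] fresh wu by (auto simp: add_root_def)
    moreover have "add_root v' V T' = rotate Ev (add_root v' V T) u w"
      using add_root_rotate[OF elim fresh wu] Ev_eq_E T' by blast
    ultimately show ?thesis unfolding rot_step_def by blast
  qed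
  then show "rot_adj Ev (add_root v' V T) (add_root v' V T')"
    if "T \<in> rot_vertices V E" "T' \<in> rot_vertices V E" "rot_adj E T T'" for T T'
    using that by (auto simp: rot_adj_def rot_vertices_V)
qed

text \<open>This is the only place where \<open>G\<close> not being complete is used: it provides two vertices
  other than \<open>v\<close>, hence an edge of \<open>R(G)\<close>.\<close>
lemma rot_step_exists:
  assumes "\<exists>x\<in>V. \<exists>y\<in>V. x \<noteq> y \<and> \<not> E x y"
  shows "\<exists>T T'. elimination_tree E V T \<and> elimination_tree E V T' \<and> rot_step E T T'"
proof -
  obtain x w where xw: "x \<in> V" "w \<in> V" "x \<noteq> w" "\<not> E x w" using assms by blast
  have "x \<noteq> v" using xw universal by auto
  moreover have "w \<noteq> v" using xw universal E_sym[of v x] by auto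
  define C where "C = V - {x, w}"
  have C: "v \<in> C" "x \<notin> C" "w \<notin> C" "C \<subseteq> V" "finite C"
    using v_in \<open>x \<noteq> v\<close> \<open>w \<noteq> v\<close> finite_V by (auto simp: C_def)
  have "E v y \<and> E y v" if "y \<in> C" "y \<noteq> v" for y
    using universal E_sym C(4) that by blast
  then obtain T where T: "elimination_tree E C T"
    using exists_elimination_tree[OF C(5,1)] by blast
  have conn: "connected_on E B" if "C \<subseteq> B" "B \<subseteq> V" for B
    using connected_on_V C(1) that by blast
  have V: "insert w (insert x C) = V" "insert x (insert w C) = V" using xw by (auto simp: C_def)
  let ?Tw = "add_root w (insert x C) (add_root x C T)"
  let ?Tx = "add_root x (insert w C) (add_root w C T)"
  have "elimination_tree E (insert x C) (add_root x C T)"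
    using elimination_tree_add_root[OF T C(2) conn] C(4) xw(1) by blast
  then have Tw: "elimination_tree E V ?Tw"
    using elimination_tree_add_root[of E "insert x C" _ w] conn[of V] C(3) xw(3) V(1) by auto
  have "elimination_tree E (insert w C) (add_root w C T)"
    using elimination_tree_add_root[OF T C(3) conn] C(4) xw(2) by blast
  then have Tx: "elimination_tree E V ?Tx"
    using elimination_tree_add_root[of E "insert w C" _ x] conn[of V] C(2) xw(3) V(2) by auto
  have "E w v" using E_sym universal \<open>w \<noteq> v\<close> xw(2) by blast
  then have "?Tx = rotate E ?Tw w x" using rotate_add_roots[OF T C(2,3) xw(3) C(1)] by simp
  moreover have "?Tw x = Some w" using xw by (simp add: add_root_def)
  ultimately have "rot_step E ?Tw ?Tx" unfolding rot_step_def by blast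
  then show ?thesis using Tw Tx by blast
qed

lemma chromatic_number_twin_le:
  assumes "\<exists>x\<in>V. \<exists>y\<in>V. x \<noteq> y \<and> \<not> E x y"
  shows "chromatic_number (rot_vertices Vv Ev) (rot_adj Ev)
     \<le> chromatic_number (rot_vertices V E) (rot_adj E)"
proof -
  let ?k = "chromatic_number (rot_vertices V E) (rot_adj E)"
  have col: "colorable (rot_vertices V E) (rot_adj E) ?k"
    using colorable_rot_graph[of V E] finite_V E_sym by blast
  obtain T T' where "elimination_tree E V T" "elimination_tree E V T'" "rot_step E T T'"
    using rot_step_exists[OF assms] by blast
  then have "2 \<le> ?k" using colorable_two_le[OF col] by (auto simp: rot_vertices_V rot_adj_def)
  then have prism: "colorable (rot_vertices V E \<times> {0, 1}) (prism_adj (rot_adj E)) ?k"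
    by (rule colorable_prism[OF col])
  have "colorable (rot_vertices Vv Ev) (rot_adj Ev) ?k"
  proof (rule colorable_hom[OF prism])
    show "(\<lambda>T. (merge_twins T, twin_parity T)) ` rot_vertices Vv Ev \<subseteq> rot_vertices V E \<times> {0, 1}"
    proof (rule image_subsetI)
      fix T assume "T \<in> rot_vertices Vv Ev"
      then have "merge_twins T \<in> rot_vertices V E"
        using elimination_tree_merge_twins by (simp add: rot_vertices_V rot_vertices_Vv)
      moreover have "twin_parity T = 0 \<or> twin_parity T = 1"
        using twin_parity_less_2[of T] by linarith
      ultimately show "(merge_twins T, twin_parity T) \<in> rot_vertices V E \<times> {0, 1}" by blast
    qed
    show "prism_adj (rot_adj E) (merge_twins T, twin_parity T) (merge_twins T', twin_parity T')"
      if "T \<in> rot_vertices Vv Ev" "T' \<in> rot_vertices Vv Ev" "rot_adj Ev T T'" for T T'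
    proof -
      have elim: "elimination_tree Ev Vv T" "elimination_tree Ev Vv T'"
        using that(1,2) by (simp_all add: rot_vertices_Vv)
      have "rot_adj E a b \<Longrightarrow> rot_adj E b a" for a b by (auto simp: rot_adj_def)
      then show ?thesis
        using that(3) rotation_merge_twins[OF elim] rotation_merge_twins[OF elim(2,1)]
          prism_adj_sym[of "rot_adj E"] by (auto simp: rot_adj_def)
    qed
  qed
  then show ?thesis by (rule chromatic_number_le)
qed

end

theorem proposition3p4:
  fixes V :: "'a set" and E :: "'a \<Rightarrow> 'a \<Rightarrow> bool" and v v' :: 'a
  assumes "simple_graph V E"
    and "connected_on E V"
    and "\<exists>x\<in>V. \<exists>y\<in>V. x \<noteq> y \<and> \<not> E x y"
    and "v \<in> V" and "\<forall>x\<in>V. x \<noteq> v \<longrightarrow> E v x"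
    and "v' \<notin> V"
  shows "chromatic_number (rot_vertices (insert v' V) (add_twin E v v')) (rot_adj (add_twin E v v'))
       = chromatic_number (rot_vertices V E) (rot_adj E)"
proof -
  interpret universal_twin V E v v' using assms(1,4-6) by unfold_locales
  show ?thesis
    using chromatic_number_le_twin chromatic_number_twin_le[OF assms(3)] by (rule antisym[rotated])
qed

end
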